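(* Let $S\subset\mathbb{R}^2$ be a finite point set and let $\mathbf{T}_1,\ldots,\mathbf{T}_k$ be triangulations of $S$. Let $G$ be the complete directed graph on vertex set $\{1,\ldots,k\}$ in which the arc $(i,j)$, $i\ne j$, has length $d(\mathbf{T}_i,\mathbf{T}_j)$. Then for every solution (a triangulation $C$ of $S$ together with paths $P_1,\ldots,P_k$, where $P_i$ goes from $\mathbf{T}_i$ to $C$), the objective value $\sum_{i=1}^k \mathrm{length}(P_i)$ is at least one half of the length of any cycle packing of $G$.
   Context: A parallel flip transforms a triangulation $T$ of $S$ (viewed as an edge set) into $T'=(T\setminus E)\cup E'$, where $E\subseteq T$, such that $T'$ is a triangulation of $S$ and no two edges of $E$ lie in a common triangle of $T$. A path of length $\ell$ is a sequence of triangulations $T_0,\ldots,T_\ell$ of $S$ such that each $T_{i+1}$ is obtained from $T_i$ by a parallel flip. The distance $d(T,T')$ is the minimum length of a path from $T$ to $T'$. A cycle packing of a directed graph is a collection of vertex-disjoint directed cycles (a set of arcs in which every vertex has at most one outgoing and at most one incoming arc; cycles with two arcs are allowed). The length of a cycle packing is the sum of the lengths of its arcs. *)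

theory Defs
  imports "HOL-Analysis.Analysis"
begin

type_synonym point = "real \<times> real"
type_synonym edge = "point set"
type_synonym triangulation = "edge set"

definition edges_of :: "point set \<Rightarrow> edge set" where
  "edges_of S = {e. e \<subseteq> S \<and> card e = 2 \<and> convex hull e \<inter> S = e}"

text \<open>Two segments do not cross: they meet at most in a common endpoint.\<close>
definition noncrossing :: "edge \<Rightarrow> edge \<Rightarrow> bool" where
  "noncrossing e f \<longleftrightarrow> convex hull e \<inter> convex hull f \<subseteq> convex hull (e \<inter> f)"

definition is_triangulation :: "point set \<Rightarrow> triangulation \<Rightarrow> bool" where
  "is_triangulation S T \<longleftrightarrow>
     T \<subseteq> edges_of S \<and>
     (\<forall>e\<in>T. \<forall>f\<in>T. noncrossing e f) \<and>
     (\<forall>e\<in>edges_of S - T. \<exists>f\<in>T. \<not> noncrossing e f)"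

definition triangles_of :: "point set \<Rightarrow> triangulation \<Rightarrow> point set set" where
  "triangles_of S T = {{a,b,c} | a b c. a \<noteq> b \<and> b \<noteq> c \<and> a \<noteq> c \<and>
      {a,b} \<in> T \<and> {b,c} \<in> T \<and> {a,c} \<in> T \<and>
      convex hull {a,b,c} \<inter> S = {a,b,c}}"

definition parallel_flip :: "point set \<Rightarrow> triangulation \<Rightarrow> triangulation \<Rightarrow> bool" where
  "parallel_flip S T T' \<longleftrightarrow>
     (\<exists>E E'. E \<subseteq> T \<and> T' = (T - E) \<union> E' \<and> is_triangulation S T' \<and>
        (\<forall>e\<in>E. \<forall>f\<in>E. e \<noteq> f \<longrightarrow> \<not> (\<exists>t\<in>triangles_of S T. e \<subseteq> t \<and> f \<subseteq> t)))"

definition is_flip_path :: "point set \<Rightarrow> triangulation list \<Rightarrow> bool" where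
  "is_flip_path S P \<longleftrightarrow> P \<noteq> [] \<and> (\<forall>X\<in>set P. is_triangulation S X) \<and>
     (\<forall>i. Suc i < length P \<longrightarrow> parallel_flip S (P ! i) (P ! Suc i))"

definition path_length :: "triangulation list \<Rightarrow> nat" where
  "path_length P = length P - 1"

definition flip_dist :: "point set \<Rightarrow> triangulation \<Rightarrow> triangulation \<Rightarrow> nat" where
  "flip_dist S T T' = (LEAST l. \<exists>P. is_flip_path S P \<and> hd P = T \<and> last P = T' \<and> path_length P = l)"

text \<open>Cycle packing in the complete digraph on {1..k}: a set of arcs (i,j), i \<noteq> j,
  in which every vertex has at most one outgoing and at most one incoming arc, and
  equally many of each (so the arcs form vertex-disjoint directed cycles).\<close>
definition is_cycle_packing :: "nat \<Rightarrow> (nat \<times> nat) set \<Rightarrow> bool" where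
  "is_cycle_packing k A \<longleftrightarrow>
     A \<subseteq> {(i,j). i \<in> {1..k} \<and> j \<in> {1..k} \<and> i \<noteq> j} \<and>
     (\<forall>v. card {j. (v,j) \<in> A} \<le> 1 \<and> card {i. (i,v) \<in> A} \<le> 1 \<and>
          card {j. (v,j) \<in> A} = card {i. (i,v) \<in> A})"

end

theory Submission
  imports Defs
begin

text \<open>
  Going along \<open>P\<^sub>i\<close> to \<open>C\<close> and then backwards along \<open>P\<^sub>j\<close> gives
  \<open>d(T\<^sub>i,T\<^sub>j) \<le> |P\<^sub>i| + |P\<^sub>j|\<close>; in a cycle packing every vertex is the tail of at most one arc
  and the head of at most one arc, so summing over the arcs counts every \<open>|P\<^sub>i|\<close> at most twice.

  Walking backwards needs that parallel flips are reversible: if \<open>T' = (T - E) \<union> E'\<close> and no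
  two edges of \<open>E\<close> lie in a common triangle of \<open>T\<close>, then no triangle \<open>abc\<close> of \<open>T'\<close> has two
  sides outside \<open>T\<close>. Indeed, if \<open>ab \<notin> T\<close> then some edge \<open>uv \<in> E\<close> crosses \<open>ab\<close>. The triangles
  of \<open>T\<close> on either side of \<open>uv\<close> keep their other two sides in \<open>T'\<close>, and since no edge of
  \<open>T'\<close> enters the interior of \<open>abc\<close>, their apexes must be \<open>a\<close> and \<open>b\<close>. Hence \<open>c\<close> lies on the
  line \<open>uv\<close>, so \<open>c \<in> {u,v}\<close> and \<open>bc\<close> is a side of an old triangle. The existence of these
  triangles of \<open>T\<close> (the triangle adjacent to an edge on a given side) is proved by turning
  a ray around the endpoints of the edge and using the maximality of \<open>T\<close>.
\<close>

section \<open>Orientation and barycentric coordinates\<close>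

definition orient :: "point \<Rightarrow> point \<Rightarrow> point \<Rightarrow> real" where
  "orient a b c = (fst b - fst a) * (snd c - snd a) - (snd b - snd a) * (fst c - fst a)"

lemma orient_rotate: "orient a b c = orient b c a"
  by (simp add: orient_def algebra_simps)

lemma orient_swap: "orient a b c = - orient b a c"
  by (simp add: orient_def algebra_simps)

lemma orient_swap23: "orient a b c = - orient a c b"
  by (simp add: orient_def algebra_simps)

lemma orient_degenerate [simp]: "orient a a c = 0" "orient a b a = 0" "orient a b b = 0"
  by (simp_all add: orient_def)

lemma orient_nonzero_rotate: "orient a b c \<noteq> 0 \<Longrightarrow> orient b c a \<noteq> 0 \<and> orient c a b \<noteq> 0"
  by (metis orient_rotate)

lemma orient_affine: "orient a b ((1 - t) *\<^sub>R x + t *\<^sub>R y) = (1 - t) * orient a b x + t * orient a b y"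
  by (simp add: orient_def algebra_simps)

lemma orient_affine3:
  "u + v + w = 1 \<Longrightarrow>
   orient a b (u *\<^sub>R x + v *\<^sub>R y + w *\<^sub>R z) = u * orient a b x + v * orient a b y + w * orient a b z"
  unfolding orient_def by (simp add: algebra_simps) algebra

text \<open>\<open>bary a b c w\<close> is the barycentric coordinate of \<open>w\<close> belonging to the vertex \<open>a\<close> of the
  triangle \<open>abc\<close>; the other two are \<open>bary b c a w\<close> and \<open>bary c a b w\<close>.\<close>

definition bary :: "point \<Rightarrow> point \<Rightarrow> point \<Rightarrow> point \<Rightarrow> real" where
  "bary a b c w = orient b c w / orient b c a"

lemma bary_affine: "bary a b c ((1 - t) *\<^sub>R x + t *\<^sub>R y) = (1 - t) * bary a b c x + t * bary a b c y"
  by (simp add: bary_def orient_affine add_divide_distrib)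

lemma bary_affine3:
  "u + v + w = 1 \<Longrightarrow>
   bary a b c (u *\<^sub>R x + v *\<^sub>R y + w *\<^sub>R z) = u * bary a b c x + v * bary a b c y + w * bary a b c z"
  by (simp add: bary_def orient_affine3 add_divide_distrib)

lemma bary_vertex: "orient a b c \<noteq> 0 \<Longrightarrow> bary a b c a = 1"
  by (simp add: bary_def orient_rotate[of a b c])

lemma bary_other_vertex [simp]: "bary a b c b = 0" "bary a b c c = 0"
  by (simp_all add: bary_def)

lemma bary_sum: "orient a b c \<noteq> 0 \<Longrightarrow> bary a b c w + bary b c a w + bary c a b w = 1"
proof -
  assume nd: "orient a b c \<noteq> 0"
  have "orient b c w + orient c a w + orient a b w = orient a b c"
       "orient b c a = orient a b c" "orient c a b = orient a b c"
    by (simp_all add: orient_def algebra_simps)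
  with nd show ?thesis
    by (simp add: bary_def add_divide_distrib[symmetric])
qed

lemma bary_decomp:
  assumes nd: "orient a b c \<noteq> 0"
  shows "w = bary a b c w *\<^sub>R a + bary b c a w *\<^sub>R b + bary c a b w *\<^sub>R c"
proof -
  let ?D = "orient a b c"
  have rot: "orient b c a = ?D" "orient c a b = ?D"
    by (simp_all add: orient_def algebra_simps)
  have "orient b c w * fst a + orient c a w * fst b + orient a b w * fst c = ?D * fst w"
       "orient b c w * snd a + orient c a w * snd b + orient a b w * snd c = ?D * snd w"
    by (simp_all add: orient_def algebra_simps)
  with nd show ?thesis
    unfolding bary_def rot by (intro prod_eqI) (simp_all add: field_simps)
qed

lemma orient_bary_expansion:
  assumes "orient a b c \<noteq> 0"
  shows "orient x y w = bary a b c w * orient x y a + bary b c a w * orient x y b + bary c a b w * orient x y c"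
  by (subst bary_decomp[OF assms, of w], rule orient_affine3[OF bary_sum[OF assms]])

lemma mem_convex_hull3_iff_bary:
  assumes nd: "orient a b c \<noteq> 0"
  shows "w \<in> convex hull {a,b,c} \<longleftrightarrow> bary a b c w \<ge> 0 \<and> bary b c a w \<ge> 0 \<and> bary c a b w \<ge> 0"
proof
  assume "w \<in> convex hull {a,b,c}"
  then obtain u v x where uvx: "0 \<le> u" "0 \<le> v" "0 \<le> x" "u + v + x = 1"
    and w: "w = u *\<^sub>R a + v *\<^sub>R b + x *\<^sub>R c"
    unfolding convex_hull_3 by blast
  have nd': "orient b c a \<noteq> 0" "orient c a b \<noteq> 0"
    using orient_nonzero_rotate[OF nd] by auto
  have "bary a b c w = u" "bary b c a w = v" "bary c a b w = x"
    using bary_affine3[OF uvx(4)] bary_vertex nd nd' w by simp_all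
  with uvx show "bary a b c w \<ge> 0 \<and> bary b c a w \<ge> 0 \<and> bary c a b w \<ge> 0" by simp
next
  assume "bary a b c w \<ge> 0 \<and> bary b c a w \<ge> 0 \<and> bary c a b w \<ge> 0"
  then show "w \<in> convex hull {a,b,c}"
    unfolding convex_hull_3 using bary_sum[OF nd, of w] bary_decomp[OF nd, of w] by blast
qed

lemma bary_zero_closed_segment:
  assumes nd: "orient a b c \<noteq> 0" and w: "w \<in> convex hull {a,b,c}" and z: "bary c a b w = 0"
  shows "w \<in> closed_segment a b"
proof -
  have nonneg: "bary a b c w \<ge> 0" "bary b c a w \<ge> 0"
    using w mem_convex_hull3_iff_bary[OF nd] by auto
  have sum: "bary a b c w = 1 - bary b c a w"
    using bary_sum[OF nd, of w] z by simp
  have "w = (1 - bary b c a w) *\<^sub>R a + bary b c a w *\<^sub>R b"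
    using bary_decomp[OF nd, of w] z sum by simp
  then show ?thesis
    unfolding in_segment using nonneg sum by auto
qed

definition lerp :: "point \<Rightarrow> point \<Rightarrow> real \<Rightarrow> point" where
  "lerp a b s = (1 - s) *\<^sub>R a + s *\<^sub>R b"

lemma lerp_0 [simp]: "lerp a b 0 = a" and lerp_1 [simp]: "lerp a b 1 = b"
  by (simp_all add: lerp_def)

lemma lerp_affine: "(1 - t) *\<^sub>R lerp a b s + t *\<^sub>R lerp a b s' = lerp a b ((1 - t) * s + t * s')"
  by (simp add: lerp_def algebra_simps)

lemma lerp_lerp: "lerp (lerp a b s) (lerp a b s') t = lerp a b ((1 - t) * s + t * s')"
  by (simp add: lerp_def algebra_simps)

lemma lerp_inj: "a \<noteq> b \<Longrightarrow> lerp a b s = lerp a b s' \<Longrightarrow> s = s'"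
proof -
  assume "a \<noteq> b" and "lerp a b s = lerp a b s'"
  then have "(s - s') *\<^sub>R (b - a) = 0" "b - a \<noteq> 0"
    by (simp_all add: lerp_def algebra_simps)
  then show "s = s'" by simp
qed

lemma orient_lerp: "orient x y (lerp a b s) = (1 - s) * orient x y a + s * orient x y b"
  by (simp add: lerp_def orient_affine)

lemma bary_lerp: "bary x y z (lerp a b s) = (1 - s) * bary x y z a + s * bary x y z b"
  by (simp add: lerp_def bary_affine)

lemma lerp_in_closed_segment: "0 \<le> s \<Longrightarrow> s \<le> 1 \<Longrightarrow> lerp a b s \<in> closed_segment a b"
  by (auto simp: lerp_def in_segment)

lemma open_segment_lerp_iff: "x \<in> open_segment a b \<longleftrightarrow> a \<noteq> b \<and> (\<exists>s. 0 < s \<and> s < 1 \<and> x = lerp a b s)"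
  by (auto simp: in_segment lerp_def)

lemma collinear_lerp:
  assumes "a \<noteq> b" "orient a b w = 0"
  obtains s where "w = lerp a b s"
proof -
  define B1 where "B1 = fst b - fst a"
  define B2 where "B2 = snd b - snd a"
  define W1 where "W1 = fst w - fst a"
  define W2 where "W2 = snd w - snd a"
  define N where "N = B1 * B1 + B2 * B2"
  define P where "P = W1 * B1 + W2 * B2"
  have N: "N \<noteq> 0"
    using assms(1) unfolding N_def B1_def B2_def by (auto simp: prod_eq_iff)
  have "B1 * W2 = B2 * W1"
    using assms(2) by (simp add: orient_def B1_def B2_def W1_def W2_def)
  then have "W1 * N = P * B1" "W2 * N = P * B2"
    unfolding N_def P_def by algebra+
  with N have "fst w = fst a + P / N * B1" "snd w = snd a + P / N * B2"
    unfolding W1_def W2_def by (simp_all add: field_simps)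
  then have "w = lerp a b (P / N)"
    unfolding lerp_def B1_def B2_def by (intro prod_eqI) (simp_all add: algebra_simps)
  then show ?thesis using that by blast
qed

lemma orient_closed_segment: "x \<in> closed_segment a b \<Longrightarrow> orient a b x = 0"
  by (auto simp: in_segment orient_affine)

lemma orient_open_segment:
  assumes "x \<in> open_segment a b"
  shows "orient a b x = 0 \<and> orient a x b = 0 \<and> orient x a b = 0 \<and> orient x b a = 0"
proof -
  have "orient a b x = 0"
    using assms orient_closed_segment open_closed_segment by blast
  moreover have "orient a x b = - orient a b x" "orient x a b = orient a b x" "orient x b a = - orient a b x"
    by (simp_all add: orient_def algebra_simps)
  ultimately show ?thesis by simp
qed

lemma orient_open_segment_of_collinear:
  "y \<in> open_segment e1 e2 \<Longrightarrow> orient a b e1 = 0 \<Longrightarrow> orient a b e2 = 0 \<Longrightarrow> orient a b y = 0"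
  by (auto simp: open_segment_lerp_iff orient_lerp)

lemma open_segment_towards_endpoint:
  fixes y e1 e2 :: point
  assumes y: "y \<in> open_segment e1 e2" and l: "0 < l" "l < 1"
  shows "(1 - l) *\<^sub>R y + l *\<^sub>R e1 \<in> open_segment e1 e2"
proof -
  obtain s where s: "e1 \<noteq> e2" "0 < s" "s < 1" "y = lerp e1 e2 s"
    using y by (auto simp: open_segment_lerp_iff)
  have "(1 - l) *\<^sub>R y + l *\<^sub>R e1 = lerp e1 e2 ((1 - l) * s)"
    using s(4) lerp_affine[of l e1 e2 s 0] by simp
  moreover have "0 < (1 - l) * s" "(1 - l) * s < 1"
    using s l by simp_all (smt (verit) mult_left_le_one_le)
  ultimately show ?thesis using s(1) by (auto simp: open_segment_lerp_iff)
qed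

lemma open_segment_subset_open_segment:
  fixes x a b :: point
  assumes "x \<in> open_segment a b"
  shows "open_segment x b \<subseteq> open_segment a b"
proof
  fix w assume "w \<in> open_segment x b"
  then obtain t where t: "0 < t" "t < 1" "w = lerp x b t"
    by (auto simp: open_segment_lerp_iff)
  obtain r where r: "a \<noteq> b" "0 < r" "r < 1" "x = lerp a b r"
    using assms by (auto simp: open_segment_lerp_iff)
  have "w = lerp a b ((1 - t) * r + t * 1)"
    using t(3) r(4) lerp_lerp[of a b r 1 t] by simp
  moreover have "0 < (1 - t) * r + t * 1"
    using r t by (simp add: add_pos_nonneg)
  moreover have "(1 - t) * r < (1 - t) * 1"
    using r t by (simp add: mult_strict_left_mono)
  then have "(1 - t) * r + t * 1 < 1" by simp
  ultimately show "w \<in> open_segment a b"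
    using r(1) by (auto simp: open_segment_lerp_iff)
qed

lemma collinear_two_points:
  assumes ab: "a \<noteq> b" and "orient a b x = 0" "orient a b y = 0" "orient c d x = 0" "orient c d y = 0"
    and "x \<noteq> y"
  shows "orient c d a = 0"
proof -
  obtain sx sy where sx: "x = lerp a b sx" and sy: "y = lerp a b sy"
    using collinear_lerp[OF ab assms(2)] collinear_lerp[OF ab assms(3)] by metis
  have "(1 - sx) * orient c d a + sx * orient c d b = 0"
       "(1 - sy) * orient c d a + sy * orient c d b = 0"
    using assms(4,5) sx sy by (simp_all add: orient_lerp)
  then have "(sy - sx) * (orient c d b - orient c d a) = 0"
    by (simp add: algebra_simps)
  moreover have "sx \<noteq> sy" using sx sy assms(6) by blast
  ultimately have "orient c d b = orient c d a" by simp
  with \<open>(1 - sx) * orient c d a + sx * orient c d b = 0\<close> show ?thesis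
    by (simp add: algebra_simps)
qed

lemma edges_of_iff:
  "{a,b} \<in> edges_of S \<longleftrightarrow> a \<noteq> b \<and> a \<in> S \<and> b \<in> S \<and> closed_segment a b \<inter> S = {a,b}"
proof -
  have "card {a,b} = 2 \<longleftrightarrow> a \<noteq> b" by (cases "a = b") auto
  then show ?thesis by (auto simp: edges_of_def segment_convex_hull)
qed

lemma edges_ofE:
  assumes "e \<in> edges_of S"
  obtains a b where "e = {a,b}" "a \<noteq> b" "a \<in> S" "b \<in> S" "closed_segment a b \<inter> S = {a,b}"
proof -
  obtain a b where "e = {a,b}" "a \<noteq> b"
    using assms by (auto simp: edges_of_def card_2_iff)
  with assms show ?thesis using that by (simp add: edges_of_iff)
qed

lemma edges_of_open_segment: "{a,b} \<in> edges_of S \<Longrightarrow> open_segment a b \<inter> S = {}"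
  unfolding edges_of_iff open_segment_def by blast

lemma edges_ofI:
  "a \<noteq> b \<Longrightarrow> a \<in> S \<Longrightarrow> b \<in> S \<Longrightarrow> open_segment a b \<inter> S = {} \<Longrightarrow> {a,b} \<in> edges_of S"
  unfolding edges_of_iff open_segment_def by auto

lemma crossing_iff:
  assumes e: "{a,b} \<in> edges_of S" and f: "{c,d} \<in> edges_of S"
  shows "\<not> noncrossing {a,b} {c,d} \<longleftrightarrow> {a,b} \<noteq> {c,d} \<and> open_segment a b \<inter> open_segment c d \<noteq> {}"
proof
  assume "\<not> noncrossing {a,b} {c,d}"
  then obtain y where y: "y \<in> closed_segment a b" "y \<in> closed_segment c d"
    and y_out: "y \<notin> convex hull ({a,b} \<inter> {c,d})"
    unfolding noncrossing_def by (auto simp: segment_convex_hull)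
  have "y \<notin> S"
  proof
    assume "y \<in> S"
    with y e f have "y \<in> {a,b} \<inter> {c,d}" by (auto simp: edges_of_iff)
    with y_out show False by (metis hull_inc)
  qed
  then have "y \<in> open_segment a b" "y \<in> open_segment c d"
    using y e f by (auto simp: open_segment_def edges_of_iff)
  moreover have "{a,b} \<noteq> {c,d}"
    using y(1) y_out by (auto simp: segment_convex_hull)
  ultimately show "{a,b} \<noteq> {c,d} \<and> open_segment a b \<inter> open_segment c d \<noteq> {}" by blast
next
  assume h: "{a,b} \<noteq> {c,d} \<and> open_segment a b \<inter> open_segment c d \<noteq> {}"
  then obtain y where y: "y \<in> open_segment a b" "y \<in> open_segment c d" by blast
  have "a \<noteq> b" using e by (simp add: edges_of_iff)
  with h have "{a,b} \<inter> {c,d} \<subseteq> {a} \<or> {a,b} \<inter> {c,d} \<subseteq> {b}" by blast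
  then have "convex hull ({a,b} \<inter> {c,d}) \<subseteq> {a} \<or> convex hull ({a,b} \<inter> {c,d}) \<subseteq> {b}"
    by (metis convex_hull_singleton hull_mono)
  moreover have "y \<noteq> a" "y \<noteq> b" using y(1) by (auto simp: open_segment_def)
  ultimately show "\<not> noncrossing {a,b} {c,d}"
    using y unfolding noncrossing_def by (auto simp: open_segment_def segment_convex_hull)
qed

lemma collinear_edges_overlap_endpoint:
  assumes ab: "{a,b} \<in> edges_of S" and cd: "closed_segment c d \<inter> S = {c,d}" "c \<in> S" "d \<in> S"
    and c: "c = lerp a b sc" and d: "d = lerp a b sd"
    and t: "0 < t" "t < 1" and u: "0 < u" "u < 1" "u = (1 - t) * sc + t * sd"
  shows "sc = 0 \<or> sc = 1"
proof -
  have E: "a \<noteq> b" "a \<in> S" "b \<in> S" "closed_segment a b \<inter> S = {a,b}"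
    using ab by (simp_all add: edges_of_iff)
  consider "0 \<le> sc \<and> sc \<le> 1" | "sc < 0" | "sc > 1" by linarith
  then show ?thesis
  proof cases
    case 1
    then have "c \<in> closed_segment a b" using c lerp_in_closed_segment by blast
    then have "c = a \<or> c = b" using E(4) cd(2) by blast
    then have "lerp a b sc = lerp a b 0 \<or> lerp a b sc = lerp a b 1" using c by simp
    then show ?thesis using lerp_inj[OF E(1)] by blast
  next
    case 2
    have "(1 - t) * sc < 0" using 2 t by (simp add: mult_pos_neg)
    then have "t * sd > 0" using u by linarith
    then have sd: "sd > 0" using t by (simp add: zero_less_mult_iff)
    define r where "r = sc / (sc - sd)"
    have r: "0 < r" "r < 1" using 2 sd by (simp_all add: r_def divide_neg_neg)
    have "sc - sd \<noteq> 0" using 2 sd by simp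
    then have "r * (sc - sd) = sc" by (simp add: r_def)
    then have "(1 - r) * sc + r * sd = 0" by (simp add: algebra_simps)
    then have "lerp c d r = a" unfolding c d lerp_lerp by simp
    then have "a \<in> closed_segment c d" using lerp_in_closed_segment[of r c d] r by simp
    then have "a = c \<or> a = d" using cd(1) E(2) by blast
    then have "lerp a b 0 = lerp a b sc \<or> lerp a b 0 = lerp a b sd" using c d by simp
    then have "0 = sc \<or> 0 = sd" using lerp_inj[OF E(1)] by blast
    with 2 sd show ?thesis by simp
  next
    case 3
    have "(1 - t) * sc > 1 - t" using 3 t by simp
    then have "t * sd < t" using u by linarith
    then have sd: "sd < 1" using t by simp
    define r where "r = (sc - 1) / (sc - sd)"
    have r: "0 < r" "r < 1" using 3 sd by (simp_all add: r_def)
    have "sc - sd \<noteq> 0" using 3 sd by simp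
    then have "r * (sc - sd) = sc - 1" by (simp add: r_def)
    then have "(1 - r) * sc + r * sd = 1" by (simp add: algebra_simps)
    then have "lerp c d r = b" unfolding c d lerp_lerp by simp
    then have "b \<in> closed_segment c d" using lerp_in_closed_segment[of r c d] r by simp
    then have "b = c \<or> b = d" using cd(1) E(3) by blast
    then have "lerp a b 1 = lerp a b sc \<or> lerp a b 1 = lerp a b sd" using c d by simp
    then have "1 = sc \<or> 1 = sd" using lerp_inj[OF E(1)] by blast
    with 3 sd show ?thesis by simp
  qed
qed

lemma crossing_edges_opposite_sides:
  assumes e: "{a,b} \<in> edges_of S" and f: "{c,d} \<in> edges_of S" and ne: "{a,b} \<noteq> {c,d}"
    and y1: "y \<in> open_segment a b" and y2: "y \<in> open_segment c d"
  shows "orient a b c * orient a b d < 0"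
proof (rule ccontr)
  assume nonneg: "\<not> orient a b c * orient a b d < 0"
  have E: "a \<noteq> b" using e by (simp add: edges_of_iff)
  have F: "closed_segment c d \<inter> S = {c,d}" "c \<in> S" "d \<in> S" "c \<noteq> d"
    using f by (simp_all add: edges_of_iff)
  obtain t where t: "0 < t" "t < 1" "y = lerp c d t" using y2 by (auto simp: open_segment_lerp_iff)
  obtain u where u: "0 < u" "u < 1" "y = lerp a b u" using y1 by (auto simp: open_segment_lerp_iff)
  have "orient a b y = 0" using orient_open_segment[OF y1] by blast
  then have lin: "(1 - t) * orient a b c + t * orient a b d = 0"
    using t(3) by (simp add: orient_lerp)
  have oc: "orient a b c = 0"
  proof (rule ccontr)
    assume oc: "orient a b c \<noteq> 0"
    have "orient a b d = - (1 - t) * orient a b c / t"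
      using lin t by (simp add: field_simps)
    then have "orient a b c * orient a b d = - (1 - t) * (orient a b c)\<^sup>2 / t"
      by (simp add: power2_eq_square)
    moreover have "(orient a b c)\<^sup>2 > 0" using oc by simp
    ultimately have "orient a b c * orient a b d < 0"
      using t by (simp add: divide_neg_pos mult_neg_pos)
    with nonneg show False by simp
  qed
  with lin t have od: "orient a b d = 0" by simp
  obtain sc where sc: "c = lerp a b sc" using collinear_lerp[OF E oc] by blast
  obtain sd where sd: "d = lerp a b sd" using collinear_lerp[OF E od] by blast
  have "lerp a b u = lerp a b ((1 - t) * sc + t * sd)"
    using u(3) t(3) unfolding sc sd lerp_lerp by simp
  then have u_eq: "u = (1 - t) * sc + t * sd" using lerp_inj[OF E] by blast
  have "sc = 0 \<or> sc = 1"
    using collinear_edges_overlap_endpoint[OF e F(1-3) sc sd t(1,2) u(1,2) u_eq] .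
  moreover have "sd = 0 \<or> sd = 1"
  proof (rule collinear_edges_overlap_endpoint[OF e _ F(3,2) sd sc])
    show "closed_segment d c \<inter> S = {d,c}"
      using F(1) by (simp add: closed_segment_commute insert_commute)
    show "u = (1 - (1 - t)) * sd + (1 - t) * sc" using u_eq by simp
    show "0 < 1 - t" "1 - t < 1" using t by simp_all
  qed (use u in simp_all)
  moreover have "sc \<noteq> sd" using F(4) sc sd by blast
  ultimately have "{c,d} = {a,b}" using sc sd by auto
  with ne show False by simp
qed

lemma crossing_point_unique:
  assumes e: "{a,b} \<in> edges_of S" and f: "{c,d} \<in> edges_of S" and ne: "{a,b} \<noteq> {c,d}"
    and t1: "0 < t1" "t1 < 1" "lerp a b t1 \<in> open_segment c d"
    and t2: "lerp a b t2 \<in> open_segment c d"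
  shows "t1 = t2"
proof -
  have ab: "a \<noteq> b" using e by (simp add: edges_of_iff)
  have "lerp a b t1 \<in> open_segment a b" using ab t1 by (auto simp: open_segment_lerp_iff)
  then have opp: "orient a b c * orient a b d < 0"
    using crossing_edges_opposite_sides[OF e f ne _ t1(3)] by blast
  obtain r1 r2 where r1: "lerp a b t1 = lerp c d r1" and r2: "lerp a b t2 = lerp c d r2"
    using t1(3) t2 by (auto simp: open_segment_lerp_iff)
  have "(1 - r1) * orient a b c + r1 * orient a b d = 0" "(1 - r2) * orient a b c + r2 * orient a b d = 0"
    using arg_cong[OF r1, of "orient a b"] arg_cong[OF r2, of "orient a b"]
    by (simp_all add: orient_lerp)
  then have "(r1 - r2) * (orient a b d - orient a b c) = 0" by (simp add: algebra_simps)
  moreover have "orient a b d - orient a b c \<noteq> 0" using opp by auto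
  ultimately have "r1 = r2" by simp
  then show ?thesis using r1 r2 lerp_inj[OF ab] by metis
qed

lemma triangulation_edges: "is_triangulation S T \<Longrightarrow> e \<in> T \<Longrightarrow> e \<in> edges_of S"
  unfolding is_triangulation_def by blast

lemma triangulation_noncrossing: "is_triangulation S T \<Longrightarrow> e \<in> T \<Longrightarrow> f \<in> T \<Longrightarrow> noncrossing e f"
  unfolding is_triangulation_def by blast

lemma triangulation_maximal:
  "is_triangulation S T \<Longrightarrow> e \<in> edges_of S \<Longrightarrow> e \<notin> T \<Longrightarrow> \<exists>f\<in>T. \<not> noncrossing e f"
  unfolding is_triangulation_def by blast

lemma triangulation_edgeE:
  assumes "is_triangulation S T" "e \<in> T"
  obtains a b where "e = {a,b}" "a \<noteq> b" "a \<in> S" "b \<in> S" "closed_segment a b \<inter> S = {a,b}"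
  using edges_ofE[OF triangulation_edges[OF assms]] by blast

lemma triangulation_open_segments_disjoint:
  assumes "is_triangulation S T" "{a,b} \<in> T" "{c,d} \<in> T" "{a,b} \<noteq> {c,d}"
  shows "open_segment a b \<inter> open_segment c d = {}"
  using crossing_iff[OF triangulation_edges[OF assms(1,2)] triangulation_edges[OF assms(1,3)]]
    triangulation_noncrossing[OF assms(1-3)] assms(4)
  by blast

lemma finite_triangulation: "finite S \<Longrightarrow> is_triangulation S T \<Longrightarrow> finite T"
proof -
  assume "finite S" "is_triangulation S T"
  then have "T \<subseteq> Pow S" "finite (Pow S)"
    unfolding is_triangulation_def edges_of_def by auto
  then show "finite T" by (rule finite_subset)
qed

definition same_side :: "point \<Rightarrow> point \<Rightarrow> point \<Rightarrow> point \<Rightarrow> bool" where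
  "same_side a b x y \<longleftrightarrow> orient a b x * orient a b y > 0"

lemma same_side_nonzero: "same_side a b x y \<Longrightarrow> orient a b x \<noteq> 0 \<and> orient a b y \<noteq> 0"
  unfolding same_side_def by auto

lemma same_side_refl: "orient a b x \<noteq> 0 \<Longrightarrow> same_side a b x x"
  unfolding same_side_def by (simp add: zero_less_mult_iff) (metis linorder_neqE_linordered_idom)

lemma same_side_sym: "same_side a b x y \<Longrightarrow> same_side a b y x"
  unfolding same_side_def by (simp add: mult.commute)

lemma same_side_trans: "same_side a b x y \<Longrightarrow> same_side a b y z \<Longrightarrow> same_side a b x z"
  unfolding same_side_def by (auto simp: zero_less_mult_iff)

lemma same_side_swap_line: "same_side b a x y \<longleftrightarrow> same_side a b x y"
  unfolding same_side_def by (simp add: orient_swap[of b a])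

lemma bary_pos_same_side: "bary c a b y > 0 \<Longrightarrow> same_side a b c y"
  unfolding bary_def same_side_def by (auto simp: zero_less_divide_iff zero_less_mult_iff)

lemma opposite_sides_same_side:
  "orient a b x * orient a b y < 0 \<Longrightarrow> orient a b u \<noteq> 0 \<Longrightarrow> same_side a b u x \<or> same_side a b u y"
  unfolding same_side_def by (auto simp: mult_less_0_iff zero_less_mult_iff)

lemma open_segment_same_side:
  assumes "x \<in> open_segment e1 e2" "same_side a b s x"
  shows "same_side a b s e1 \<or> same_side a b s e2"
proof -
  obtain r where r: "0 < r" "r < 1" "x = lerp e1 e2 r" using assms(1) by (auto simp: open_segment_lerp_iff)
  have "(1 - r) * (orient a b s * orient a b e1) + r * (orient a b s * orient a b e2) > 0"
    using assms(2) r(3) unfolding same_side_def by (simp add: orient_lerp algebra_simps)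
  then show ?thesis
    using r unfolding same_side_def by (smt (verit, best) mult_nonneg_nonpos)
qed

lemma bary_pos_off_free_side:
  assumes nd: "orient a b r \<noteq> 0" and free: "open_segment a b \<inter> S = {}"
    and y: "y \<in> S" "y \<in> convex hull {a,b,r}" "y \<noteq> a" "y \<noteq> b"
  shows "bary r a b y > 0"
proof -
  have "bary r a b y \<ge> 0" using y(2) mem_convex_hull3_iff_bary[OF nd] by simp
  moreover have "bary r a b y \<noteq> 0"
  proof
    assume "bary r a b y = 0"
    then have "y \<in> closed_segment a b" using bary_zero_closed_segment[OF nd y(2)] by simp
    then show False using free y by (auto simp: open_segment_def)
  qed
  ultimately show ?thesis by simp
qed

lemma first_exit_time:
  fixes F :: "('a \<Rightarrow> real) set"
  assumes fin: "finite F" and pos: "\<forall>f\<in>F. f y > 0" and neg: "\<exists>f\<in>F. f x < 0"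
  obtains l where "0 < l" "l < 1" "\<forall>f\<in>F. (1 - l) * f y + l * f x \<ge> 0"
    "\<exists>f\<in>F. (1 - l) * f y + l * f x = 0"
proof -
  define r where "r f = f y / (f y - f x)" for f :: "'a \<Rightarrow> real"
  define G where "G = {f\<in>F. f x < 0}"
  define l where "l = Min (r ` G)"
  have G: "finite G" "G \<noteq> {}" using fin neg by (auto simp: G_def)
  have val: "(1 - t) * f y + t * f x = f y - t * (f y - f x)" for f :: "'a \<Rightarrow> real" and t
    by (simp add: algebra_simps)
  have r_G: "0 < r f" "r f < 1" "r f * (f y - f x) = f y" if "f \<in> G" for f
    using that pos by (auto simp: G_def r_def)
  have "l \<in> r ` G" unfolding l_def using G by (intro Min_in) auto
  then obtain g where g: "g \<in> G" "l = r g" by blast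
  have l_le: "l \<le> r f" if "f \<in> G" for f
    using that G by (simp add: l_def)
  have l: "0 < l" "l < 1" using r_G g by auto
  have "(1 - l) * f y + l * f x \<ge> 0" if "f \<in> F" for f
  proof (cases "f \<in> G")
    case True
    have "f y - f x \<ge> 0" using True pos by (auto simp: G_def)
    then have "l * (f y - f x) \<le> r f * (f y - f x)" using l_le[OF True] by (simp add: mult_right_mono)
    then have "l * (f y - f x) \<le> f y" using r_G(3)[OF True] by simp
    then show ?thesis by (simp add: val)
  next
    case False
    then have "f x \<ge> 0" "f y > 0" using that pos by (auto simp: G_def)
    then show ?thesis using l by simp
  qed
  moreover have "(1 - l) * g y + l * g x = 0"
    using r_G(3)[OF g(1)] g(2) by (simp add: val)
  ultimately show ?thesis
    using that l g G_def by blast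
qed

lemma small_step_positive:
  fixes F :: "('a \<Rightarrow> real) set"
  assumes fin: "finite F" and pos: "\<forall>f\<in>F. f y > 0"
  obtains d where "0 < d" "d < 1" "\<forall>f\<in>F. (1 - d) * f y + d * f x > 0"
proof -
  have "\<forall>\<^sub>F d in at_right 0. (1 - d) * f y + d * f x > 0" if "f \<in> F" for f
  proof (rule order_tendstoD(1))
    show "((\<lambda>d. (1 - d) * f y + d * f x) \<longlongrightarrow> f y) (at_right 0)"
      by (auto intro!: tendsto_eq_intros)
  qed (use that pos in auto)
  then have "\<forall>\<^sub>F d in at_right 0. \<forall>f\<in>F. (1 - d) * f y + d * f x > 0"
    using fin by (simp add: eventually_ball_finite)
  moreover have "\<forall>\<^sub>F d in at_right (0::real). 0 < d \<and> d < 1"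
    by (simp add: eventually_at_right_field) (use zero_less_one in blast)
  ultimately have "\<forall>\<^sub>F d in at_right (0::real). 0 < d \<and> d < 1 \<and> (\<forall>f\<in>F. (1 - d) * f y + d * f x > 0)"
    by eventually_elim blast
  then show ?thesis
    using that eventually_happens[of _ "at_right (0::real)"] by auto
qed

section \<open>The first point seen when turning around a vertex\<close>

definition cot_angle :: "point \<Rightarrow> point \<Rightarrow> point \<Rightarrow> real" where
  "cot_angle p u y =
     ((fst u - fst p) * (fst y - fst p) + (snd u - snd p) * (snd y - snd p)) / \<bar>orient p u y\<bar>"

lemma cot_angle_lerp:
  assumes "0 < t"
  shows "cot_angle p u (lerp p z t) = cot_angle p u z"
proof -
  have "orient p u (lerp p z t) = t * orient p u z"
    by (simp add: orient_lerp)
  moreover have "(fst u - fst p) * (fst (lerp p z t) - fst p) + (snd u - snd p) * (snd (lerp p z t) - snd p)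
    = t * ((fst u - fst p) * (fst z - fst p) + (snd u - snd p) * (snd z - snd p))"
    by (simp add: lerp_def algebra_simps)
  ultimately show ?thesis
    using assms by (simp add: cot_angle_def abs_mult)
qed

lemma same_side_iff_cot_angle_less:
  assumes pu: "p \<noteq> u" and same: "orient p u y1 * orient p u y2 > 0"
  shows "same_side p y2 u y1 \<longleftrightarrow> cot_angle p u y2 < cot_angle p u y1"
proof -
  define N where "N = (fst u - fst p)\<^sup>2 + (snd u - snd p)\<^sup>2"
  define a1 where "a1 = (fst u - fst p) * (fst y1 - fst p) + (snd u - snd p) * (snd y1 - snd p)"
  define a2 where "a2 = (fst u - fst p) * (fst y2 - fst p) + (snd u - snd p) * (snd y2 - snd p)"
  define b1 where "b1 = orient p u y1"
  define b2 where "b2 = orient p u y2"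
  have N: "N > 0"
    using pu unfolding N_def by (auto simp: prod_eq_iff sum_power2_gt_zero_iff)
  \<comment> \<open>Lagrange's identity\<close>
  have lagrange: "orient p y2 y1 * N = a2 * b1 - b2 * a1"
    by (simp add: N_def a1_def a2_def b1_def b2_def orient_def power2_eq_square algebra_simps)
  have "orient p y2 u = - b2" by (simp add: b2_def orient_def algebra_simps)
  then have "same_side p y2 u y1 \<longleftrightarrow> - b2 * orient p y2 y1 > 0"
    unfolding same_side_def by simp
  also have "\<dots> \<longleftrightarrow> - b2 * (orient p y2 y1 * N) > 0"
    using N by (metis mult.assoc mult_pos_pos zero_less_mult_pos2 mult.commute)
  also have "\<dots> \<longleftrightarrow> b2 * (b2 * a1 - a2 * b1) > 0"
    unfolding lagrange by (simp add: algebra_simps)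
  finally have side: "same_side p y2 u y1 \<longleftrightarrow> b2 * (b2 * a1 - a2 * b1) > 0" .
  have bb: "b1 * b2 > 0" using same by (simp add: b1_def b2_def)
  show ?thesis
  proof (cases "b1 > 0")
    case True
    then have "b2 > 0" using bb by (simp add: zero_less_mult_iff)
    with True show ?thesis
      unfolding side cot_angle_def a1_def [symmetric] a2_def [symmetric] b1_def [symmetric] b2_def [symmetric]
      by (simp add: zero_less_mult_iff divide_less_eq less_divide_eq algebra_simps)
  next
    case False
    then have "b1 < 0" using bb by (cases "b1 = 0") auto
    moreover from this have "b2 < 0" using bb by (simp add: zero_less_mult_iff)
    ultimately show ?thesis
      unfolding side cot_angle_def a1_def [symmetric] a2_def [symmetric] b1_def [symmetric] b2_def [symmetric]
      by (simp add: zero_less_mult_iff divide_less_eq less_divide_eq algebra_simps)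
  qed
qed

text \<open>\<open>angular_first p u K z\<close>: when the ray from \<open>p\<close> through \<open>u\<close> is turned towards \<open>K\<close>, the first
  point of \<open>K\<close> it meets is \<open>z\<close>, and \<open>z\<close> is the nearest such point to \<open>p\<close>.\<close>

definition angular_first :: "point \<Rightarrow> point \<Rightarrow> point set \<Rightarrow> point \<Rightarrow> bool" where
  "angular_first p u K z \<longleftrightarrow> z \<in> K \<and> (\<forall>y\<in>K. \<not> same_side p z u y \<and> y \<notin> open_segment p z)"

lemma angular_first_exists:
  assumes fin: "finite K" and ne: "K \<noteq> {}" and pu: "p \<noteq> u"
    and side: "\<And>y. y \<in> K \<Longrightarrow> same_side p u v y"
  obtains z where "angular_first p u K z"
proof -
  define M where "M = Max (cot_angle p u ` K)"
  define K' where "K' = {y \<in> K. cot_angle p u y = M}"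
  have M: "cot_angle p u y \<le> M" if "y \<in> K" for y
    unfolding M_def using fin that by simp
  have "M \<in> cot_angle p u ` K" unfolding M_def using fin ne by simp
  then have "K' \<noteq> {}" by (auto simp: K'_def)
  moreover have "finite K'" using fin by (simp add: K'_def)
  ultimately obtain z where zK': "z \<in> K'" and z_min: "\<And>y. y \<in> K' \<Longrightarrow> dist p z \<le> dist p y"
    by (metis arg_min_if_finite(1,2) not_le)
  have zK: "z \<in> K" and zM: "cot_angle p u z = M" using zK' by (auto simp: K'_def)
  have "\<not> same_side p z u y" if yK: "y \<in> K" for y
  proof
    assume "same_side p z u y"
    moreover have "orient p u y * orient p u z > 0"
      using side[OF yK] side[OF zK] unfolding same_side_def by (auto simp: zero_less_mult_iff)
    ultimately have "cot_angle p u z < cot_angle p u y"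
      using same_side_iff_cot_angle_less[OF pu] by blast
    then show False using M[OF yK] zM by simp
  qed
  moreover have "y \<notin> open_segment p z" if yK: "y \<in> K" for y
  proof
    assume "y \<in> open_segment p z"
    then obtain t where t: "0 < t" "t < 1" "y = lerp p z t" and pz: "p \<noteq> z"
      by (auto simp: open_segment_lerp_iff)
    then have "y \<in> K'" using yK zM cot_angle_lerp[of t p u z] by (simp add: K'_def)
    then have "dist p z \<le> dist p y" by (rule z_min)
    moreover have "y - p = t *\<^sub>R (z - p)"
      using t(3) by (simp add: lerp_def algebra_simps)
    then have "dist p y = t * dist p z"
      using t(1) dist_norm[of y p] dist_norm[of z p] by (simp add: dist_commute)
    ultimately show False using t pz by (simp add: mult_le_cancel_right1)
  qed
  ultimately show ?thesis
    using that zK unfolding angular_first_def by blast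
qed

definition uncrossed :: "point set \<Rightarrow> triangulation \<Rightarrow> point \<Rightarrow> point \<Rightarrow> bool" where
  "uncrossed S T a b \<longleftrightarrow> open_segment a b \<inter> S = {} \<and>
     (\<forall>g1 g2. {g1,g2} \<in> T \<longrightarrow> open_segment g1 g2 \<inter> open_segment a b \<noteq> {} \<longrightarrow>
        orient a b g1 = 0 \<and> orient a b g2 = 0)"

lemma uncrossed_subsegment:
  assumes tri: "is_triangulation S T" and eT: "{e,e'} \<in> T" and sub: "open_segment a b \<subseteq> open_segment e e'"
    and coll: "orient a b e = 0" "orient a b e' = 0"
  shows "uncrossed S T a b"
proof -
  have "orient a b g1 = 0 \<and> orient a b g2 = 0"
    if gT: "{g1,g2} \<in> T" and "open_segment g1 g2 \<inter> open_segment a b \<noteq> {}" for g1 g2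
  proof -
    have "{g1,g2} = {e,e'}"
      using that sub triangulation_open_segments_disjoint[OF tri gT eT] by blast
    then show ?thesis using coll by (auto simp: doubleton_eq_iff)
  qed
  moreover have "open_segment a b \<inter> S = {}"
    using sub edges_of_open_segment[OF triangulation_edges[OF tri eT]] by blast
  ultimately show ?thesis unfolding uncrossed_def by blast
qed

lemma uncrossed_edge: "is_triangulation S T \<Longrightarrow> {a,b} \<in> T \<Longrightarrow> uncrossed S T a b"
  by (rule uncrossed_subsegment) auto

lemma bary_cevian_decomp:
  assumes nd: "orient x0 u v \<noteq> 0" and z: "bary v x0 u z \<noteq> 0"
  shows "bary u v x0 w = orient x0 z w / orient x0 z u + (bary u v x0 z / bary v x0 u z) * bary v x0 u w"
proof -
  let ?Bu = "bary u v x0" and ?Bv = "bary v x0 u"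
  have nd': "orient u v x0 \<noteq> 0" using orient_nonzero_rotate[OF nd] by auto
  have expand: "orient x0 z w = ?Bu z * orient x0 u w + ?Bv z * orient x0 v w" for w
  proof -
    have "orient w x0 z = bary x0 u v z * orient w x0 x0 + ?Bu z * orient w x0 u + ?Bv z * orient w x0 v"
      by (rule orient_bary_expansion[OF nd])
    moreover have "orient w x0 z = orient x0 z w" "orient w x0 u = orient x0 u w" "orient w x0 v = orient x0 v w"
      by (simp_all add: orient_rotate[symmetric])
    ultimately show ?thesis by simp
  qed
  have "orient v x0 u = orient x0 u v" "orient v x0 w = - orient x0 v w" for w
    by (simp_all add: orient_def algebra_simps)
  then have o1: "orient x0 u w = ?Bv w * orient x0 u v" and o2: "orient x0 v w = - ?Bu w * orient x0 u v" for w
    using nd by (simp_all add: bary_def)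
  have o_w: "orient x0 z w = (?Bu z * ?Bv w - ?Bv z * ?Bu w) * orient x0 u v" for w
    unfolding expand[of w] o1[of w] o2[of w] by (simp add: algebra_simps)
  have "?Bv u = 0" "?Bu u = 1" using bary_vertex[OF nd'] by simp_all
  then have "orient x0 z u = (- ?Bv z) * orient x0 u v" using o_w[of u] by simp
  then have "orient x0 z w / orient x0 z u = (?Bu z * ?Bv w - ?Bv z * ?Bu w) / (- ?Bv z)"
    unfolding o_w using nd by simp
  then show ?thesis
    using z by (simp add: field_simps)
qed
lemma fan_exit_point:
  assumes nd: "orient x0 u v \<noteq> 0"
    and z: "z \<in> convex hull {x0,u,v}" "bary v x0 u z > 0"
    and y: "y \<in> open_segment x0 z"
    and e: "e \<notin> convex hull {x0,u,v}" "same_side x0 z u e"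
  obtains w where "w \<in> open_segment y e" "w \<in> closed_segment u v \<or> (w \<in> closed_segment x0 u \<and> w \<noteq> x0)"
proof -
  define Bo where "Bo = bary x0 u v"
  define Bu where "Bu = bary u v x0"
  define Bv where "Bv = bary v x0 u"
  define Dn where "Dn w = orient x0 z w / orient x0 z u" for w
  have nd': "orient u v x0 \<noteq> 0" "orient v x0 u \<noteq> 0"
    using orient_nonzero_rotate[OF nd] by auto
  have hull_iff: "w \<in> convex hull {x0,u,v} \<longleftrightarrow> Bo w \<ge> 0 \<and> Bu w \<ge> 0 \<and> Bv w \<ge> 0" for w
    unfolding Bo_def Bu_def Bv_def by (rule mem_convex_hull3_iff_bary[OF nd])
  have zb: "Bo z \<ge> 0" "Bu z \<ge> 0" and Bvz: "Bv z > 0"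
    using z hull_iff by (auto simp: Bv_def)
  obtain ty where ty: "0 < ty" "ty < 1" "y = lerp x0 z ty"
    using y by (auto simp: open_segment_lerp_iff)
  have Boy: "Bo y > 0"
    using ty zb bary_vertex[OF nd] by (simp add: Bo_def bary_lerp add_pos_nonneg)
  have Bvy: "Bv y > 0"
    using ty Bvz by (simp add: Bv_def bary_lerp)
  have ozu: "orient x0 z u \<noteq> 0" using e(2) same_side_nonzero by blast
  have Dn_e: "Dn e > 0"
    using e(2) unfolding Dn_def same_side_def by (auto simp: zero_less_divide_iff zero_less_mult_iff)
  have Dn_y: "Dn y = 0" and Dn_x0: "Dn x0 = 0"
    using orient_open_segment[OF y] by (simp_all add: Dn_def)
  have Bu_eq: "Bu w = Dn w + (Bu z / Bv z) * Bv w" for w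
    using bary_cevian_decomp[OF nd, of z w] Bvz by (simp add: Bu_def Bv_def Dn_def)
  have "Bo e < 0 \<or> Bv e < 0"
  proof (rule ccontr)
    assume "\<not> (Bo e < 0 \<or> Bv e < 0)"
    moreover from this have "Bu e \<ge> 0" using Bu_eq[of e] Dn_e zb Bvz by simp
    ultimately show False using e(1) hull_iff by auto
  qed
  then obtain l where l: "0 < l" "l < 1" "\<forall>f\<in>{Bo, Bv}. (1 - l) * f y + l * f e \<ge> 0"
    "\<exists>f\<in>{Bo, Bv}. (1 - l) * f y + l * f e = 0"
    using first_exit_time[of "{Bo, Bv}" y e] Boy Bvy by auto
  define w where "w = (1 - l) *\<^sub>R y + l *\<^sub>R e"
  have Bw: "Bo w = (1 - l) * Bo y + l * Bo e" "Bv w = (1 - l) * Bv y + l * Bv e"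
    "Dn w = (1 - l) * Dn y + l * Dn e"
    by (simp_all add: w_def Bo_def Bv_def Dn_def bary_affine orient_affine add_divide_distrib)
  have Dn_w: "Dn w > 0" using Bw(3) Dn_y Dn_e l by simp
  have "Bo w \<ge> 0" "Bv w \<ge> 0" using Bw l(3) by simp_all
  moreover from this have "Bu w \<ge> 0" using Bu_eq[of w] Dn_w zb Bvz by simp
  ultimately have w_hull: "w \<in> convex hull {x0,u,v}" using hull_iff by blast
  have "y \<noteq> e" using Dn_y Dn_e by auto
  then have "w \<in> open_segment y e"
    using l by (auto simp: w_def open_segment_lerp_iff lerp_def)
  moreover have "w \<in> closed_segment u v \<or> (w \<in> closed_segment x0 u \<and> w \<noteq> x0)"
  proof (cases "Bo w = 0")
    case True
    have "w \<in> convex hull {u,v,x0}" using w_hull by (simp add: insert_commute)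
    with True show ?thesis
      using bary_zero_closed_segment[OF nd'(1)] by (simp add: Bo_def)
  next
    case False
    then have "Bv w = 0" using l(4) Bw by auto
    then have "w \<in> closed_segment x0 u"
      using bary_zero_closed_segment[OF nd w_hull] by (simp add: Bv_def)
    moreover have "w \<noteq> x0" using Dn_w Dn_x0 by auto
    ultimately show ?thesis by simp
  qed
  ultimately show ?thesis using that by blast
qed

lemma angular_first_edge:
  assumes x0S: "x0 \<in> S" and nd: "orient x0 u v \<noteq> 0" and side1: "uncrossed S T x0 u"
    and first: "angular_first x0 u {y\<in>S. y \<in> convex hull {x0,u,v} \<and> y \<noteq> x0 \<and> y \<noteq> u} z"
  shows "bary v x0 u z > 0" "{x0,z} \<in> edges_of S"
proof -
  have zS: "z \<in> S" and z_hull: "z \<in> convex hull {x0,u,v}" and zx0: "z \<noteq> x0" and zu: "z \<noteq> u"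
    using first by (auto simp: angular_first_def)
  have free: "open_segment x0 u \<inter> S = {}" using side1 by (simp add: uncrossed_def)
  show Bvz: "bary v x0 u z > 0" by (rule bary_pos_off_free_side[OF nd free zS z_hull zx0 zu])
  have "y \<notin> open_segment x0 z" if "y \<in> S" "y \<in> convex hull {x0,u,v}" for y
  proof (cases "y = x0 \<or> y = u")
    case True
    have "orient x0 u z \<noteq> 0" using same_side_nonzero[OF bary_pos_same_side[OF Bvz]] by simp
    with True show ?thesis using orient_open_segment[of u x0 z] by (auto simp: open_segment_def)
  next
    case False
    then have "y \<in> {y\<in>S. y \<in> convex hull {x0,u,v} \<and> y \<noteq> x0 \<and> y \<noteq> u}" using that by simp
    then show ?thesis using first unfolding angular_first_def by blast
  qed
  moreover have "closed_segment x0 z \<subseteq> convex hull {x0,u,v}"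
    by (rule closed_segment_subset) (auto intro: hull_inc z_hull)
  ultimately have "open_segment x0 z \<inter> S = {}" using open_closed_segment by blast
  then show "{x0,z} \<in> edges_of S" using edges_ofI[OF zx0[symmetric] x0S zS] by blast
qed

lemma angular_first_crossing_edge:
  assumes tri: "is_triangulation S T" and x0S: "x0 \<in> S" and vS: "v \<in> S" and nd: "orient x0 u v \<noteq> 0"
    and side1: "uncrossed S T x0 u" and side2: "uncrossed S T u v"
    and u_cond: "u \<in> S \<or> (\<forall>g1 g2. {g1,g2} \<in> T \<longrightarrow> u \<in> open_segment g1 g2 \<longrightarrow>
                   orient u v g1 = 0 \<and> orient u v g2 = 0)"
    and first: "angular_first x0 u {y\<in>S. y \<in> convex hull {x0,u,v} \<and> y \<noteq> x0 \<and> y \<noteq> u} z"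
    and y: "y \<in> open_segment x0 z" and eT: "{e1,e2} \<in> T" and y_e: "y \<in> open_segment e1 e2"
    and e1_side: "same_side x0 z u e1"
  shows "e1 = u"
proof -
  have z_hull: "z \<in> convex hull {x0,u,v}" using first by (simp add: angular_first_def)
  have Bvz: "bary v x0 u z > 0" using angular_first_edge[OF x0S nd side1 first] by simp
  have e1S: "e1 \<in> S" using triangulation_edges[OF tri eT] by (simp add: edges_of_iff)
  show ?thesis
  proof (cases "e1 \<in> convex hull {x0,u,v}")
    case True
    show ?thesis
    proof (rule ccontr)
      assume "e1 \<noteq> u"
      moreover have "e1 \<noteq> x0" using same_side_nonzero[OF e1_side] by auto
      ultimately have "e1 \<in> {y\<in>S. y \<in> convex hull {x0,u,v} \<and> y \<noteq> x0 \<and> y \<noteq> u}"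
        using True e1S by simp
      then show False using first e1_side unfolding angular_first_def by blast
    qed
  next
    case False
    have y_off: "orient u v y \<noteq> 0" "orient x0 u y \<noteq> 0"
    proof -
      obtain t where t: "0 < t" "t < 1" "y = lerp x0 z t" using y by (auto simp: open_segment_lerp_iff)
      have "bary x0 u v z \<ge> 0" using z_hull mem_convex_hull3_iff_bary[OF nd] by simp
      then have "bary x0 u v y > 0" "bary v x0 u y > 0"
        using t Bvz bary_vertex[OF nd] by (simp_all add: bary_lerp add_pos_nonneg)
      then show "orient u v y \<noteq> 0" "orient x0 u y \<noteq> 0" by (auto simp: bary_def)
    qed
    obtain w where w: "w \<in> open_segment y e1"
      and w_side: "w \<in> closed_segment u v \<or> (w \<in> closed_segment x0 u \<and> w \<noteq> x0)"
      using fan_exit_point[OF nd z_hull Bvz y False e1_side] .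
    have w_e: "w \<in> open_segment e1 e2"
      using open_segment_subset_open_segment[OF y_e[unfolded open_segment_commute[of e1]]] w
      by (auto simp: open_segment_commute)
    then have "w \<notin> S" using edges_of_open_segment[OF triangulation_edges[OF tri eT]] by blast
    \<comment> \<open>the edge \<open>e1 e2\<close> would have to run along a side of the triangle through \<open>y\<close>\<close>
    from w_side have "w \<in> closed_segment u v \<or> w \<in> open_segment x0 u"
      by (auto simp: open_segment_def)
    then have "(orient u v e1 = 0 \<and> orient u v e2 = 0) \<or> (orient x0 u e1 = 0 \<and> orient x0 u e2 = 0)"
    proof
      assume "w \<in> closed_segment u v"
      then have "w = u \<or> w \<in> open_segment u v" using \<open>w \<notin> S\<close> vS by (auto simp: open_segment_def)
      then show ?thesis using u_cond side2 eT w_e \<open>w \<notin> S\<close> unfolding uncrossed_def by blast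
    next
      assume "w \<in> open_segment x0 u"
      then show ?thesis using side1 eT w_e unfolding uncrossed_def by blast
    qed
    then show ?thesis using y_off orient_open_segment_of_collinear[OF y_e] by blast
  qed
qed

lemma angular_first_joined:
  assumes tri: "is_triangulation S T" and x0S: "x0 \<in> S" and vS: "v \<in> S" and nd: "orient x0 u v \<noteq> 0"
    and side1: "uncrossed S T x0 u" and side2: "uncrossed S T u v"
    and u_cond: "u \<in> S \<or> (\<forall>g1 g2. {g1,g2} \<in> T \<longrightarrow> u \<in> open_segment g1 g2 \<longrightarrow>
                   orient u v g1 = 0 \<and> orient u v g2 = 0)"
    and first: "angular_first x0 u {y\<in>S. y \<in> convex hull {x0,u,v} \<and> y \<noteq> x0 \<and> y \<noteq> u} z"
  shows "{x0,z} \<in> T \<or> (u \<in> S \<and> (\<exists>c. {u,c} \<in> T \<and> open_segment u c \<inter> open_segment x0 z \<noteq> {}))"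
proof (cases "{x0,z} \<in> T")
  case False
  have edge: "{x0,z} \<in> edges_of S" and "bary v x0 u z > 0"
    using angular_first_edge[OF x0S nd side1 first] by simp_all
  then have ozu: "orient x0 z u \<noteq> 0"
    using same_side_nonzero[OF bary_pos_same_side] by (simp add: orient_swap23[of x0 z u])
  obtain g where gT: "g \<in> T" and "\<not> noncrossing {x0,z} g"
    using triangulation_maximal[OF tri edge False] by blast
  moreover obtain g1 g2 where g: "g = {g1,g2}" using triangulation_edgeE[OF tri gT] by metis
  ultimately have cr: "{x0,z} \<noteq> {g1,g2}" "open_segment x0 z \<inter> open_segment g1 g2 \<noteq> {}"
    using crossing_iff[OF edge] triangulation_edges[OF tri gT] by auto
  then obtain y where y1: "y \<in> open_segment x0 z" and y2: "y \<in> open_segment g1 g2" by blast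
  have "orient x0 z g1 * orient x0 z g2 < 0"
    using crossing_edges_opposite_sides[OF edge _ cr(1) y1 y2] triangulation_edges[OF tri gT] g by simp
  then obtain e1 e2 where e: "{e1,e2} = {g1,g2}" and e1_side: "same_side x0 z u e1"
    using opposite_sides_same_side[OF _ ozu] by (metis insert_commute)
  have eT: "{e1,e2} \<in> T" using gT g e by simp
  have y_e: "y \<in> open_segment e1 e2" using y2 e by (metis doubleton_eq_iff open_segment_commute)
  have "e1 = u"
    by (rule angular_first_crossing_edge[OF tri x0S vS nd side1 side2 u_cond first y1 eT y_e e1_side])
  moreover have "e1 \<in> S" using triangulation_edges[OF tri eT] by (simp add: edges_of_iff)
  ultimately show ?thesis using eT y1 y_e by blast
qed simp

lemma visible_point_on_side:
  assumes fin: "finite S" and sS: "s \<in> S" and s_off: "orient p q s \<noteq> 0"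
  obtains y0 where "y0 \<in> S" "same_side p q s y0" "open_segment p y0 \<inter> S = {}"
proof -
  define H where "H = {y\<in>S. same_side p q s y}"
  have "s \<in> H" using sS same_side_refl[OF s_off] by (simp add: H_def)
  moreover have "finite H" using fin by (simp add: H_def)
  ultimately have "H \<noteq> {}" "finite H" by auto
  define y0 where "y0 = arg_min_on (\<lambda>y. \<bar>orient p q y\<bar>) H"
  have y0H: "y0 \<in> H" unfolding y0_def by (rule arg_min_if_finite(1)) fact+
  have y0_min: "\<bar>orient p q y0\<bar> \<le> \<bar>orient p q y\<bar>" if "y \<in> H" for y
    using arg_min_if_finite(2)[OF \<open>finite H\<close> \<open>H \<noteq> {}\<close>] that unfolding y0_def by (meson not_le)
  have y0: "y0 \<in> S" "same_side p q s y0" using y0H by (auto simp: H_def)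
  have "y \<notin> S" if y: "y \<in> open_segment p y0" for y
  proof
    assume "y \<in> S"
    obtain t where t: "0 < t" "t < 1" "y = lerp p y0 t" using y by (auto simp: open_segment_lerp_iff)
    then have oy: "orient p q y = t * orient p q y0" by (simp add: orient_lerp)
    then have "same_side p q s y" using y0(2) t by (simp add: same_side_def mult.left_commute)
    with \<open>y \<in> S\<close> have "\<bar>orient p q y0\<bar> \<le> t * \<bar>orient p q y0\<bar>"
      using y0_min[of y] oy t by (simp add: H_def abs_mult)
    moreover have "orient p q y0 \<noteq> 0" using same_side_nonzero[OF y0(2)] by simp
    ultimately show False using t by (simp add: mult_le_cancel_right1)
  qed
  with y0 show ?thesis using that by blast
qed

lemma finite_crossing_parameters:
  assumes fin: "finite S" and tri: "is_triangulation S T"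
    and edge: "{p,y} \<in> edges_of S" and notin: "{p,y} \<notin> T"
  shows "finite {t. 0 < t \<and> t < 1 \<and> (\<exists>g1 g2. {g1,g2} \<in> T \<and> lerp p y t \<in> open_segment g1 g2)}"
proof -
  define C where "C g = {t. 0 < t \<and> t < 1 \<and> (\<exists>g1 g2. g = {g1,g2} \<and> lerp p y t \<in> open_segment g1 g2)}" for g
  have "finite (C g)" if gT: "g \<in> T" for g
  proof -
    have "t = t'" if "t \<in> C g" "t' \<in> C g" for t t'
    proof -
      obtain g1 g2 where g: "g = {g1,g2}" "lerp p y t \<in> open_segment g1 g2" "0 < t" "t < 1"
        using \<open>t \<in> C g\<close> by (auto simp: C_def)
      moreover have "lerp p y t' \<in> open_segment g1 g2"
        using \<open>t' \<in> C g\<close> g(1) by (auto simp: C_def doubleton_eq_iff open_segment_commute)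
      moreover have "{g1,g2} \<in> edges_of S" "{p,y} \<noteq> {g1,g2}"
        using triangulation_edges[OF tri gT] gT notin g(1) by auto
      ultimately show ?thesis
        using crossing_point_unique[OF edge] by blast
    qed
    then show ?thesis
      by (metis finite.emptyI finite_insert finite_subset insert_absorb subsetI singletonI)
  qed
  then have "finite (\<Union>g\<in>T. C g)" using finite_triangulation[OF fin tri] by simp
  moreover have "{t. 0 < t \<and> t < 1 \<and> (\<exists>g1 g2. {g1,g2} \<in> T \<and> lerp p y t \<in> open_segment g1 g2)}
      \<subseteq> (\<Union>g\<in>T. C g)"
    unfolding C_def by blast
  ultimately show ?thesis by (rule finite_subset[rotated])
qed

lemma first_crossing_point:
  assumes fin: "finite S" and tri: "is_triangulation S T"
    and edge: "{p,y} \<in> edges_of S" and notin: "{p,y} \<notin> T"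
  obtains x e e' where "x \<in> open_segment p y" "{e,e'} \<in> T" "x \<in> open_segment e e'"
    "uncrossed S T p x"
proof -
  define X where "X = {t. 0 < t \<and> t < 1 \<and> (\<exists>g1 g2. {g1,g2} \<in> T \<and> lerp p y t \<in> open_segment g1 g2)}"
  have "finite X" unfolding X_def by (rule finite_crossing_parameters[OF fin tri edge notin])
  obtain g where gT: "g \<in> T" and "\<not> noncrossing {p,y} g"
    using triangulation_maximal[OF tri edge notin] by blast
  moreover obtain g1 g2 where g: "g = {g1,g2}" using triangulation_edgeE[OF tri gT] by metis
  ultimately obtain w where w: "w \<in> open_segment p y" "w \<in> open_segment g1 g2"
    using crossing_iff[OF edge] triangulation_edges[OF tri gT] by auto
  then obtain t where "0 < t" "t < 1" "w = lerp p y t" by (auto simp: open_segment_lerp_iff)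
  with w g gT have "t \<in> X" unfolding X_def by blast
  define ts where "ts = Min X"
  have "ts \<in> X" using Min_in[OF \<open>finite X\<close>] \<open>t \<in> X\<close> by (auto simp: ts_def)
  then obtain e e' where ts: "0 < ts" "ts < 1" and eT: "{e,e'} \<in> T"
    and x_e: "lerp p y ts \<in> open_segment e e'"
    unfolding X_def by blast
  define x where "x = lerp p y ts"
  have "p \<noteq> y" using edge by (simp add: edges_of_iff)
  then have x: "x \<in> open_segment p y" using ts by (auto simp: x_def open_segment_lerp_iff)
  have "open_segment p x \<subseteq> open_segment p y"
    using open_segment_subset_open_segment[of x y p] x by (simp add: open_segment_commute)
  then have free: "open_segment p x \<inter> S = {}"
    using edges_of_open_segment[OF edge] by blast
  \<comment> \<open>a crossing before \<open>x\<close> would have a smaller parameter than \<open>Min X\<close>\<close>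
  have "open_segment g1 g2 \<inter> open_segment p x = {}" if "{g1,g2} \<in> T" for g1 g2
  proof (rule ccontr)
    assume "open_segment g1 g2 \<inter> open_segment p x \<noteq> {}"
    then obtain w where "w \<in> open_segment g1 g2" and "w \<in> open_segment p x" by blast
    moreover from \<open>w \<in> open_segment p x\<close> obtain l where "0 < l" "l < 1" "w = lerp p x l"
      unfolding open_segment_lerp_iff by blast
    moreover have "lerp p x l = lerp p y (l * ts)"
      unfolding x_def using lerp_lerp[of p y 0 ts l] by simp
    moreover have "0 < l * ts" "l * ts < 1"
      using \<open>0 < l\<close> \<open>l < 1\<close> ts mult_strict_mono[of l 1 ts 1] by simp_all
    ultimately have "lerp p y (l * ts) \<in> open_segment g1 g2" "0 < l * ts" "l * ts < 1" by simp_all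
    then have "l * ts \<in> X" using that unfolding X_def by blast
    then have "ts \<le> l * ts" using \<open>finite X\<close> by (simp add: ts_def)
    then show False using \<open>0 < l\<close> \<open>l < 1\<close> ts by simp
  qed
  with free have "uncrossed S T p x" by (auto simp: uncrossed_def)
  with x eT x_e show ?thesis using that by (simp add: x_def)
qed

lemma fan_through_edge_interior:
  assumes fin: "finite S" and tri: "is_triangulation S T" and pS: "p \<in> S"
    and side1: "uncrossed S T p x" and eT: "{e,e'} \<in> T" and x_e: "x \<in> open_segment e e'"
    and nd: "orient p x e \<noteq> 0"
  obtains z where "z \<in> S" "{p,z} \<in> T" "z \<in> convex hull {p,x,e}" "bary e p x z > 0"
proof -
  have eS: "e \<in> S" using triangulation_edges[OF tri eT] by (simp add: edges_of_iff)
  have xS: "x \<notin> S" using x_e edges_of_open_segment[OF triangulation_edges[OF tri eT]] by blast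
  have side2: "uncrossed S T x e"
  proof (rule uncrossed_subsegment[OF tri eT])
    show "open_segment x e \<subseteq> open_segment e e'"
      using open_segment_subset_open_segment[of x e' e] x_e by (simp add: open_segment_commute)
    show "orient x e e = 0" "orient x e e' = 0" using orient_open_segment[OF x_e] by simp_all
  qed
  have x_cond: "orient x e h1 = 0 \<and> orient x e h2 = 0"
    if hT: "{h1,h2} \<in> T" and "x \<in> open_segment h1 h2" for h1 h2
  proof -
    have "{h1,h2} = {e,e'}"
      using that x_e triangulation_open_segments_disjoint[OF tri hT eT] by blast
    then show ?thesis using orient_open_segment[OF x_e] by (auto simp: doubleton_eq_iff)
  qed
  define K where "K = {y\<in>S. y \<in> convex hull {p,x,e} \<and> y \<noteq> p \<and> y \<noteq> x}"
  have free1: "open_segment p x \<inter> S = {}" using side1 by (simp add: uncrossed_def)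
  have K_pos: "bary e p x y > 0" if "y \<in> K" for y
    using bary_pos_off_free_side[OF nd free1] that unfolding K_def by blast
  have "e \<noteq> p" using nd by auto
  with eS xS have "e \<in> K" by (auto simp: K_def hull_inc)
  moreover have "finite K" using fin by (simp add: K_def)
  moreover have "p \<noteq> x" using pS xS by auto
  ultimately obtain z where first: "angular_first p x K z"
    using angular_first_exists[of K p x e] K_pos bary_pos_same_side by blast
  then have "{p,z} \<in> T"
    using angular_first_joined[OF tri pS eS nd side1 side2] x_cond xS unfolding K_def by blast
  moreover have "z \<in> K" using first by (simp add: angular_first_def)
  ultimately show ?thesis using that K_pos unfolding K_def by blast
qed

lemma triangle_point_same_side:
  assumes nd: "orient p b c \<noteq> 0" and z: "z \<in> convex hull {p,b,c}" "bary c p b z > 0"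
    and b: "same_side p q s b" and c: "same_side p q s c"
  shows "same_side p q s z"
proof -
  have "orient p q z = bary b c p z * orient p q b + bary c p b z * orient p q c"
    using orient_bary_expansion[OF nd, of p q z] by simp
  then have "orient p q s * orient p q z
      = bary b c p z * (orient p q s * orient p q b) + bary c p b z * (orient p q s * orient p q c)"
    by (simp add: algebra_simps)
  moreover have "bary b c p z \<ge> 0" using z(1) mem_convex_hull3_iff_bary[OF nd] by simp
  then have "bary b c p z * (orient p q s * orient p q b) \<ge> 0"
    using b unfolding same_side_def by simp
  moreover have "bary c p b z * (orient p q s * orient p q c) > 0"
    using z(2) c unfolding same_side_def by simp
  ultimately show ?thesis unfolding same_side_def by linarith
qed

lemma triangulation_neighbour_on_side:
  assumes fin: "finite S" and tri: "is_triangulation S T" and pq: "{p,q} \<in> T"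
    and sS: "s \<in> S" and s_off: "orient p q s \<noteq> 0"
  obtains z where "z \<in> S" "same_side p q s z" "{p,z} \<in> T"
proof -
  have pS: "p \<in> S" using triangulation_edges[OF tri pq] by (simp add: edges_of_iff)
  obtain y0 where y0: "y0 \<in> S" "same_side p q s y0" "open_segment p y0 \<inter> S = {}"
    using visible_point_on_side[OF fin sS s_off] by blast
  have "p \<noteq> y0" using same_side_nonzero[OF y0(2)] by auto
  then have edge: "{p,y0} \<in> edges_of S" using edges_ofI pS y0 by blast
  show ?thesis
  proof (cases "{p,y0} \<in> T")
    case True
    with y0 that show ?thesis by blast
  next
    case False
    \<comment> \<open>turn around \<open>p\<close> inside the triangle cut off by the first edge crossing \<open>p y0\<close>\<close>
    obtain x g1 g2 where x: "x \<in> open_segment p y0" and gT: "{g1,g2} \<in> T"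
      and x_g: "x \<in> open_segment g1 g2" and side1: "uncrossed S T p x"
      using first_crossing_point[OF fin tri edge False] by blast
    obtain t where t: "0 < t" "t < 1" "x = lerp p y0 t" using x by (auto simp: open_segment_lerp_iff)
    have x_side: "same_side p q s x"
      using y0(2) t by (simp add: same_side_def orient_lerp mult.left_commute)
    obtain e e' where ee: "{e,e'} = {g1,g2}" and e_side: "same_side p q s e"
      using open_segment_same_side[OF x_g x_side] by (metis insert_commute)
    have eT: "{e,e'} \<in> T" using gT ee by simp
    have x_e: "x \<in> open_segment e e'" using x_g ee by (metis doubleton_eq_iff open_segment_commute)
    have "{p,y0} \<noteq> {g1,g2}" using gT False by auto
    then have "orient p y0 g1 * orient p y0 g2 < 0"
      using crossing_edges_opposite_sides[OF edge triangulation_edges[OF tri gT] _ x x_g] by blast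
    then have "orient p y0 e \<noteq> 0" using ee by (auto simp: doubleton_eq_iff)
    moreover have "orient p x e = t * orient p y0 e"
      using t(3) orient_lerp[of e p p y0 t] by (simp add: orient_rotate[of e p])
    ultimately have nd: "orient p x e \<noteq> 0" using t by simp
    obtain z where "z \<in> S" "{p,z} \<in> T" "z \<in> convex hull {p,x,e}" "bary e p x z > 0"
      using fan_through_edge_interior[OF fin tri pS side1 eT x_e nd] .
    moreover from this have "same_side p q s z"
      using triangle_point_same_side[OF nd _ _ x_side e_side] by blast
    ultimately show ?thesis using that by blast
  qed
qed

lemma triangle_fan_edge:
  assumes fin: "finite S" and tri: "is_triangulation S T" and ab: "{a,b} \<in> T" and br: "{b,r} \<in> T"
    and nd: "orient a b r \<noteq> 0"
  obtains z where "angular_first a b {y\<in>S. y \<in> convex hull {a,b,r} \<and> y \<noteq> a \<and> y \<noteq> b} z"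
    "{a,z} \<in> T \<or> (\<exists>c. {b,c} \<in> T \<and> open_segment b c \<inter> open_segment a z \<noteq> {})"
proof -
  define K where "K = {y\<in>S. y \<in> convex hull {a,b,r} \<and> y \<noteq> a \<and> y \<noteq> b}"
  have abE: "a \<noteq> b" "a \<in> S" "b \<in> S" and rS: "r \<in> S"
    using triangulation_edges[OF tri ab] triangulation_edges[OF tri br] by (simp_all add: edges_of_iff)
  have free: "open_segment a b \<inter> S = {}"
    using edges_of_open_segment[OF triangulation_edges[OF tri ab]] .
  have "same_side a b r y" if "y \<in> K" for y
    using bary_pos_same_side bary_pos_off_free_side[OF nd free] that unfolding K_def by blast
  moreover have "r \<in> K" using rS nd by (auto simp: K_def hull_inc)
  moreover have "finite K" using fin by (simp add: K_def)
  ultimately obtain z where first: "angular_first a b K z"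
    using angular_first_exists[OF _ _ abE(1)] by blast
  then have "{a,z} \<in> T \<or> (b \<in> S \<and> (\<exists>c. {b,c} \<in> T \<and> open_segment b c \<inter> open_segment a z \<noteq> {}))"
    using angular_first_joined[OF tri abE(2) rS nd uncrossed_edge[OF tri ab] uncrossed_edge[OF tri br]]
      abE(3) unfolding K_def by blast
  with first show ?thesis using that unfolding K_def by blast
qed

lemma crossing_edge_from_vertex_side:
  assumes nd: "orient a b r \<noteq> 0" and z: "z \<in> convex hull {a,b,r}" "bary r a b z > 0"
    and y: "y \<in> open_segment b c" "y \<in> open_segment a z"
  shows "same_side b r a c \<and> same_side a b r c"
proof -
  obtain t where t: "0 < t" "t < 1" "y = lerp a z t" using y(2) by (auto simp: open_segment_lerp_iff)
  obtain t' where t': "0 < t'" "t' < 1" "y = lerp b c t'" using y(1) by (auto simp: open_segment_lerp_iff)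
  have nonneg: "bary a b r z \<ge> 0" using z(1) mem_convex_hull3_iff_bary[OF nd] by simp
  have "orient a b z = bary r a b z * orient a b r" "orient b r z = bary a b r z * orient b r a"
    using orient_bary_expansion[OF nd, of a b z] orient_bary_expansion[OF nd, of b r z] by simp_all
  then have "t' * orient a b c = (t * bary r a b z) * orient a b r"
    "t' * orient b r c = ((1 - t) + t * bary a b r z) * orient b r a"
    using arg_cong[OF trans[OF t(3)[symmetric] t'(3)], of "orient a b"]
      arg_cong[OF trans[OF t(3)[symmetric] t'(3)], of "orient b r"]
    by (simp_all add: orient_lerp algebra_simps)
  moreover have "t * bary r a b z > 0" "(1 - t) + t * bary a b r z > 0"
    using t z(2) nonneg by (simp_all add: add_pos_nonneg)
  moreover have "orient a b r * orient a b r > 0" "orient b r a * orient b r a > 0"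
    using same_side_refl[of a b r] same_side_refl[of b r a] nd orient_nonzero_rotate[OF nd]
    unfolding same_side_def by auto
  ultimately have "t' * (orient a b r * orient a b c) > 0" "t' * (orient b r a * orient b r c) > 0"
    by (metis mult.left_commute mult_pos_pos)+
  then show ?thesis
    using t'(1) unfolding same_side_def by (simp_all add: zero_less_mult_iff)
qed

lemma triangle_same_side:
  assumes nd: "orient a b r \<noteq> 0" and br: "same_side a x b r" and z: "z \<in> convex hull {a,b,r}" "z \<noteq> a"
  shows "same_side a x b z"
proof -
  have nonneg: "bary b r a z \<ge> 0" "bary r a b z \<ge> 0" using z(1) mem_convex_hull3_iff_bary[OF nd] by auto
  have "bary b r a z > 0 \<or> bary r a b z > 0"
  proof (rule ccontr)
    assume "\<not> ?thesis"
    then have "bary b r a z = 0" "bary r a b z = 0" using nonneg by auto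
    then have "z = a" using bary_decomp[OF nd, of z] bary_sum[OF nd, of z] by simp
    with z(2) show False ..
  qed
  moreover have "orient a x b * orient a x z
      = bary b r a z * (orient a x b * orient a x b) + bary r a b z * (orient a x b * orient a x r)"
    using orient_bary_expansion[OF nd, of a x z] by (simp add: algebra_simps)
  moreover have "orient a x b * orient a x b > 0" "orient a x b * orient a x r > 0"
    using same_side_refl[of a x b] same_side_nonzero[OF br] br unfolding same_side_def by auto
  ultimately have "orient a x b * orient a x z > 0"
    using nonneg by (smt (verit) mult_nonneg_nonneg mult_pos_pos)
  then show ?thesis unfolding same_side_def .
qed

lemma closed_segments_intersect:
  assumes p: "orient p rp q \<noteq> 0" "\<not> same_side p rp q rq"
    and q: "orient q rq p \<noteq> 0" "\<not> same_side q rq p rp"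
    and "p \<noteq> rp" "q \<noteq> rq"
  obtains x where "x \<in> closed_segment p rp" "x \<in> closed_segment q rq"
proof -
  have half: "\<exists>l. 0 \<le> l \<and> l \<le> 1 \<and> orient a b (lerp c d l) = 0"
    if n: "orient a b c \<noteq> 0" and s: "\<not> same_side a b c d" for a b c d
  proof -
    define F G where "F = orient a b c" and "G = orient a b d"
    have FG: "F * G \<le> 0" using s by (simp add: same_side_def F_def G_def)
    have "F \<noteq> 0" using n by (simp add: F_def)
    then have "F * F > 0" using same_side_refl[OF n] by (simp add: same_side_def F_def)
    then have "F - G \<noteq> 0" using FG by (auto simp: algebra_simps)
    define l where "l = F / (F - G)"
    have "orient a b (lerp c d l) = F - l * (F - G)"
      by (simp add: orient_lerp F_def G_def algebra_simps)
    also have "\<dots> = 0" using \<open>F - G \<noteq> 0\<close> by (simp add: l_def)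
    finally have "orient a b (lerp c d l) = 0" .
    moreover have "0 \<le> l \<and> l \<le> 1"
    proof (cases "F > 0")
      case True
      then have "G \<le> 0" using FG by (simp add: mult_le_0_iff)
      with True show ?thesis by (simp add: l_def)
    next
      case False
      with \<open>F \<noteq> 0\<close> have "F < 0" by simp
      then have "G \<ge> 0" using FG by (simp add: mult_le_0_iff)
      with \<open>F < 0\<close> show ?thesis by (simp add: l_def divide_le_eq_1 zero_le_divide_iff)
    qed
    ultimately show ?thesis by blast
  qed
  obtain l1 where l1: "0 \<le> l1" "l1 \<le> 1" "orient p rp (lerp q rq l1) = 0" using half[OF p] by blast
  obtain l2 where l2: "0 \<le> l2" "l2 \<le> 1" "orient q rq (lerp p rp l2) = 0" using half[OF q] by blast
  have o1: "lerp q rq l1 \<in> closed_segment q rq" and o2: "lerp p rp l2 \<in> closed_segment p rp"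
    using l1 l2 lerp_in_closed_segment by auto
  have "lerp q rq l1 = lerp p rp l2"
  proof (rule ccontr)
    assume "lerp q rq l1 \<noteq> lerp p rp l2"
    then have "orient q rq p = 0"
      using collinear_two_points[OF \<open>p \<noteq> rp\<close>] l1(3) l2(3)
        orient_closed_segment[OF o1] orient_closed_segment[OF o2] by blast
    with q(1) show False ..
  qed
  with o1 o2 show ?thesis using that by auto
qed

lemma fan_beyond_first_neighbour:
  assumes fin: "finite S" and tri: "is_triangulation S T" and pq: "{p,q} \<in> T"
    and rp: "angular_first p q {c\<in>S. same_side p q s c \<and> {p,c} \<in> T} rp"
  obtains z where "z \<in> S" "{q,z} \<in> T" "same_side p q s z"
    "angular_first q p {y\<in>S. y \<in> convex hull {q,p,rp} \<and> y \<noteq> q \<and> y \<noteq> p} z"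
proof -
  have rpS: "rp \<in> S" and rp_side: "same_side p q s rp" and prp: "{p,rp} \<in> T"
    using rp by (auto simp: angular_first_def)
  have nd: "orient q p rp \<noteq> 0"
    using same_side_nonzero[OF rp_side] by (simp add: orient_swap[of q p])
  have qp: "{q,p} \<in> T" using pq by (simp add: insert_commute)
  obtain z where first: "angular_first q p {y\<in>S. y \<in> convex hull {q,p,rp} \<and> y \<noteq> q \<and> y \<noteq> p} z"
    and joined: "{q,z} \<in> T \<or> (\<exists>c. {p,c} \<in> T \<and> open_segment p c \<inter> open_segment q z \<noteq> {})"
    using triangle_fan_edge[OF fin tri qp prp nd] by blast
  have zS: "z \<in> S" and z_hull: "z \<in> convex hull {q,p,rp}" and "z \<noteq> q" "z \<noteq> p"
    using first by (auto simp: angular_first_def)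
  have "open_segment q p \<inter> S = {}"
    using edges_of_open_segment[OF triangulation_edges[OF tri pq]] by (simp add: open_segment_commute)
  then have z_pos: "bary rp q p z > 0"
    using bary_pos_off_free_side[OF nd] zS z_hull \<open>z \<noteq> q\<close> \<open>z \<noteq> p\<close> by blast
  have "{q,z} \<in> T"
  proof (rule ccontr)
    assume "{q,z} \<notin> T"
    then obtain c y where cT: "{p,c} \<in> T" and y: "y \<in> open_segment p c" "y \<in> open_segment q z"
      using joined by blast
    have c: "same_side p rp q c" "same_side q p rp c"
      using crossing_edge_from_vertex_side[OF nd z_hull z_pos y] by auto
    have "c \<in> S" using triangulation_edges[OF tri cT] by (simp add: edges_of_iff)
    moreover have "same_side p q s c"
      using same_side_trans[OF rp_side] c(2) by (simp add: same_side_swap_line)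
    ultimately have "\<not> same_side p rp q c" using rp cT unfolding angular_first_def by blast
    with c(1) show False by contradiction
  qed
  moreover have "same_side p q s z"
    using same_side_trans[OF rp_side] bary_pos_same_side[OF z_pos] by (simp add: same_side_swap_line)
  ultimately show ?thesis using that zS first by blast
qed

lemma first_neighbour_exists:
  assumes fin: "finite S" and tri: "is_triangulation S T" and pq: "{p,q} \<in> T"
    and sS: "s \<in> S" and s_off: "orient p q s \<noteq> 0"
  obtains r where "angular_first p q {c\<in>S. same_side p q s c \<and> {p,c} \<in> T} r"
proof -
  define N where "N = {c\<in>S. same_side p q s c \<and> {p,c} \<in> T}"
  obtain c where "c \<in> S" "same_side p q s c" "{p,c} \<in> T"
    using triangulation_neighbour_on_side[OF fin tri pq sS s_off] .
  then have "N \<noteq> {}" unfolding N_def by blast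
  moreover have "finite N" using fin by (simp add: N_def)
  moreover have "p \<noteq> q" using triangulation_edges[OF tri pq] by (simp add: edges_of_iff)
  moreover have "same_side p q s y" if "y \<in> N" for y using that by (simp add: N_def)
  ultimately show ?thesis using angular_first_exists[of N p q s] that unfolding N_def by blast
qed

lemma first_neighbours_coincide:
  assumes fin: "finite S" and tri: "is_triangulation S T" and pq: "{p,q} \<in> T"
    and rp: "angular_first p q {c\<in>S. same_side p q s c \<and> {p,c} \<in> T} rp"
    and rq: "angular_first q p {c\<in>S. same_side q p s c \<and> {q,c} \<in> T} rq"
  shows "rp = rq"
proof (rule ccontr)
  assume "rp \<noteq> rq"
  have qp: "{q,p} \<in> T" using pq by (simp add: insert_commute)
  have rp': "same_side p q s rp" "{p,rp} \<in> T" and rq': "same_side q p s rq" "{q,rq} \<in> T"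
    using rp rq unfolding angular_first_def by simp_all
  obtain z1 where z1: "z1 \<in> S" "{q,z1} \<in> T" "same_side p q s z1"
    and first1: "angular_first q p {y\<in>S. y \<in> convex hull {q,p,rp} \<and> y \<noteq> q \<and> y \<noteq> p} z1"
    using fan_beyond_first_neighbour[OF fin tri pq rp] .
  obtain z2 where z2: "z2 \<in> S" "{p,z2} \<in> T" "same_side q p s z2"
    and first2: "angular_first p q {y\<in>S. y \<in> convex hull {p,q,rq} \<and> y \<noteq> p \<and> y \<noteq> q} z2"
    using fan_beyond_first_neighbour[OF fin tri qp rq] .
  have "same_side q p s z1" "same_side p q s z2"
    using z1(3) z2(3) same_side_swap_line by blast+
  then have z1_out: "\<not> same_side q rq p z1" and z2_out: "\<not> same_side p rp q z2"
    using rp rq z1 z2 unfolding angular_first_def by blast+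
  have "orient p q rp \<noteq> 0" "orient q p rq \<noteq> 0"
    using same_side_nonzero[OF rp'(1)] same_side_nonzero[OF rq'(1)] by simp_all
  moreover have "orient p q rq = - orient q p rq" "orient p rp q = - orient p q rp"
    "orient q p rp = - orient p q rp" "orient q rq p = - orient q p rq"
    by (simp_all add: orient_def algebra_simps)
  ultimately have nd_p: "orient p q rq \<noteq> 0" "orient p rp q \<noteq> 0"
    and nd_q: "orient q p rp \<noteq> 0" "orient q rq p \<noteq> 0"
    by simp_all
  have "z2 \<in> convex hull {p,q,rq}" "z2 \<noteq> p" and "z1 \<in> convex hull {q,p,rp}" "z1 \<noteq> q"
    using first1 first2 unfolding angular_first_def by simp_all
  then have "\<not> same_side p rp q rq" "\<not> same_side q rq p rp"
    using triangle_same_side[OF nd_p(1)] triangle_same_side[OF nd_q(1)] z1_out z2_out by blast+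
  moreover have "p \<noteq> rp" "q \<noteq> rq" using nd_p nd_q by auto
  \<comment> \<open>the line of each of the edges \<open>p rp\<close>, \<open>q rq\<close> weakly separates the endpoints of the other\<close>
  ultimately obtain x where "x \<in> closed_segment p rp" "x \<in> closed_segment q rq"
    using closed_segments_intersect[OF nd_p(2) _ nd_q(2)] by blast
  moreover have "{p,rp} \<inter> {q,rq} = {}" using \<open>rp \<noteq> rq\<close> nd_p nd_q by auto
  moreover have "noncrossing {p,rp} {q,rq}" using triangulation_noncrossing[OF tri rp'(2) rq'(2)] .
  ultimately show False unfolding noncrossing_def by (auto simp: segment_convex_hull)
qed

lemma common_first_neighbour_empty_triangle:
  assumes fin: "finite S" and tri: "is_triangulation S T" and pq: "{p,q} \<in> T"
    and rp: "angular_first p q {c\<in>S. same_side p q s c \<and> {p,c} \<in> T} r"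
    and rq: "angular_first q p {c\<in>S. same_side q p s c \<and> {q,c} \<in> T} r"
  shows "convex hull {p,q,r} \<inter> S = {p,q,r}"
proof -
  have pqS: "p \<in> S" "q \<in> S" using triangulation_edges[OF tri pq] by (simp_all add: edges_of_iff)
  have r: "r \<in> S" "same_side p q s r" "{q,r} \<in> T"
    using rp rq unfolding angular_first_def by simp_all
  have nd: "orient q p r \<noteq> 0"
    using same_side_nonzero[OF r(2)] by (simp add: orient_swap[of q p])
  have hull_eq: "convex hull {q,p,r} = convex hull {p,q,r}" "convex hull {r,q,p} = convex hull {p,q,r}"
    by (simp_all add: insert_commute)
  have qr: "closed_segment r q \<inter> S = {q,r}"
    using triangulation_edges[OF tri r(3)] by (auto simp: edges_of_iff closed_segment_commute)
  have beside: "y \<in> {q,r}"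
    if y: "y \<in> S" "y \<in> convex hull {p,q,r}" and side: "\<not> same_side q r p y" for y
  proof -
    have "bary p r q y \<ge> 0"
      using y(2) mem_convex_hull3_iff_bary[OF nd] hull_eq by simp
    moreover have "\<not> bary p r q y > 0"
      using side bary_pos_same_side[of p r q y] by (auto simp: same_side_swap_line)
    ultimately have "bary p r q y = 0" by simp
    moreover have "orient r q p \<noteq> 0" using orient_nonzero_rotate[OF nd] by simp
    ultimately have "y \<in> closed_segment r q"
      using bary_zero_closed_segment[of r q p y] y(2) hull_eq by simp
    with y(1) qr show ?thesis by blast
  qed
  obtain z where z: "z \<in> S" "{q,z} \<in> T" "same_side p q s z"
    and first: "angular_first q p {y\<in>S. y \<in> convex hull {q,p,r} \<and> y \<noteq> q \<and> y \<noteq> p} z"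
    using fan_beyond_first_neighbour[OF fin tri pq rp] .
  have "same_side q p s z" using z(3) same_side_swap_line by blast
  then have "\<not> same_side q r p z" using rq z unfolding angular_first_def by blast
  moreover have "z \<in> convex hull {p,q,r}" "z \<noteq> q"
    using first hull_eq unfolding angular_first_def by simp_all
  ultimately have "z = r" using beside z(1) by blast
  have "y \<in> {p,q,r}" if y: "y \<in> convex hull {p,q,r}" "y \<in> S" for y
  proof (rule ccontr)
    assume "y \<notin> {p,q,r}"
    then have "y \<in> {y\<in>S. y \<in> convex hull {q,p,r} \<and> y \<noteq> q \<and> y \<noteq> p}"
      using y hull_eq by simp
    then have "\<not> same_side q r p y"
      using first \<open>z = r\<close> unfolding angular_first_def by blast
    then show False using beside y \<open>y \<notin> {p,q,r}\<close> by blast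
  qed
  moreover have "{p,q,r} \<subseteq> convex hull {p,q,r}" by (auto intro: hull_inc)
  ultimately show ?thesis using pqS r(1) by blast
qed

lemma triangulation_adjacent_triangle:
  assumes fin: "finite S" and tri: "is_triangulation S T" and pq: "{p,q} \<in> T"
    and sS: "s \<in> S" and s_off: "orient p q s \<noteq> 0"
  obtains w where "w \<in> S" "same_side p q s w" "{p,w} \<in> T" "{q,w} \<in> T" "convex hull {p,q,w} \<inter> S = {p,q,w}"
proof -
  have qp: "{q,p} \<in> T" using pq by (simp add: insert_commute)
  obtain rp where rp: "angular_first p q {c\<in>S. same_side p q s c \<and> {p,c} \<in> T} rp"
    using first_neighbour_exists[OF fin tri pq sS s_off] .
  moreover have "orient q p s \<noteq> 0" using s_off by (simp add: orient_swap[of q p])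
  then obtain rq where rq: "angular_first q p {c\<in>S. same_side q p s c \<and> {q,c} \<in> T} rq"
    using first_neighbour_exists[OF fin tri qp sS] by blast
  moreover have "rp = rq" by (rule first_neighbours_coincide[OF fin tri pq rp rq])
  ultimately have "convex hull {p,q,rp} \<inter> S = {p,q,rp}"
    using common_first_neighbour_empty_triangle[OF fin tri pq] by blast
  moreover have "rp \<in> S" "same_side p q s rp" "{p,rp} \<in> T" "{q,rp} \<in> T"
    using rp rq \<open>rp = rq\<close> unfolding angular_first_def by simp_all
  ultimately show ?thesis using that by blast
qed

section \<open>Reversing a parallel flip\<close>

definition in_triangle_interior :: "point \<Rightarrow> point \<Rightarrow> point \<Rightarrow> point \<Rightarrow> bool" where
  "in_triangle_interior a b c y \<longleftrightarrow> bary a b c y > 0 \<and> bary b c a y > 0 \<and> bary c a b y > 0"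

lemma in_triangle_interior_not_in_S:
  assumes nd: "orient a b c \<noteq> 0" and empty: "convex hull {a,b,c} \<inter> S = {a,b,c}"
    and y: "in_triangle_interior a b c y"
  shows "y \<notin> S"
proof
  assume "y \<in> S"
  moreover have "y \<in> convex hull {a,b,c}"
    using y mem_convex_hull3_iff_bary[OF nd] unfolding in_triangle_interior_def by simp
  ultimately have "y \<in> {a,b,c}" using empty by blast
  moreover have "bary b c a a = 0" "bary c a b b = 0" "bary a b c c = 0" by simp_all
  ultimately show False using y unfolding in_triangle_interior_def by auto
qed

lemma in_triangle_interior_towards:
  assumes nd: "orient a b c \<noteq> 0" and y: "in_triangle_interior a b c y"
    and x: "x \<in> convex hull {a,b,c}" and l: "0 \<le> l" "l < 1"
  shows "in_triangle_interior a b c ((1 - l) *\<^sub>R y + l *\<^sub>R x)"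
  using x y l mem_convex_hull3_iff_bary[OF nd]
  unfolding in_triangle_interior_def bary_affine by (simp add: add_pos_nonneg)

lemma interior_exit_through_side:
  assumes nd: "orient a b c \<noteq> 0" and z: "in_triangle_interior a b c z"
    and m: "m \<notin> convex hull {a,b,c}"
  obtains q where "q \<in> open_segment z m"
    "q \<in> closed_segment b c \<or> q \<in> closed_segment c a \<or> q \<in> closed_segment a b"
proof -
  have nd': "orient b c a \<noteq> 0" "orient c a b \<noteq> 0" using orient_nonzero_rotate[OF nd] by auto
  have "bary a b c m < 0 \<or> bary b c a m < 0 \<or> bary c a b m < 0"
    using m mem_convex_hull3_iff_bary[OF nd] by auto
  then obtain l where l: "0 < l" "l < 1"
    "\<forall>f\<in>{bary a b c, bary b c a, bary c a b}. (1 - l) * f z + l * f m \<ge> 0"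
    "\<exists>f\<in>{bary a b c, bary b c a, bary c a b}. (1 - l) * f z + l * f m = 0"
    using first_exit_time[of "{bary a b c, bary b c a, bary c a b}" z m] z
    unfolding in_triangle_interior_def by auto
  define q where "q = (1 - l) *\<^sub>R z + l *\<^sub>R m"
  have q_hull: "q \<in> convex hull {a,b,c}"
    using l(3) mem_convex_hull3_iff_bary[OF nd] by (simp add: q_def bary_affine)
  have "convex hull {b,c,a} = convex hull {a,b,c}" "convex hull {c,a,b} = convex hull {a,b,c}"
    by (simp_all add: insert_commute)
  moreover have "bary a b c q = 0 \<or> bary b c a q = 0 \<or> bary c a b q = 0"
    using l(4) by (simp add: q_def bary_affine)
  ultimately have "q \<in> closed_segment b c \<or> q \<in> closed_segment c a \<or> q \<in> closed_segment a b"
    using bary_zero_closed_segment[OF nd'(1), of q] bary_zero_closed_segment[OF nd'(2), of q]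
      bary_zero_closed_segment[OF nd, of q] q_hull by auto
  moreover have "z \<noteq> m"
    using z m mem_convex_hull3_iff_bary[OF nd] unfolding in_triangle_interior_def by auto
  then have "q \<in> open_segment z m"
    using l(1,2) unfolding q_def open_segment_lerp_iff lerp_def by blast
  ultimately show ?thesis using that by blast
qed

lemma triangulation_edge_avoids_interior:
  assumes tri: "is_triangulation S T" and nd: "orient a b c \<noteq> 0"
    and empty: "convex hull {a,b,c} \<inter> S = {a,b,c}" and sides: "{a,b} \<in> T" "{b,c} \<in> T" "{a,c} \<in> T"
    and mT: "{m1,m2} \<in> T" and z: "in_triangle_interior a b c z"
  shows "z \<notin> closed_segment m1 m2"
proof
  assume zc: "z \<in> closed_segment m1 m2"
  have m: "m1 \<in> S" "m2 \<in> S" "m1 \<noteq> m2"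
    using triangulation_edges[OF tri mT] by (simp_all add: edges_of_iff)
  have z_m: "z \<in> open_segment m1 m2"
    using zc in_triangle_interior_not_in_S[OF nd empty z] m by (auto simp: open_segment_def)
  have "orient a b z \<noteq> 0" "orient b c z \<noteq> 0" "orient a c z \<noteq> 0"
    using z by (auto simp: in_triangle_interior_def bary_def orient_swap[of c a z])
  then have "z \<notin> closed_segment a b" "z \<notin> closed_segment b c" "z \<notin> closed_segment a c"
    using orient_closed_segment by blast+
  then have not_side: "{m1,m2} \<notin> {{a,b},{b,c},{a,c}}"
    using zc by (auto simp: doubleton_eq_iff closed_segment_commute)
  have sides_disjoint: "open_segment m1 m2 \<inter> open_segment s1 s2 = {}"
    if "{s1,s2} \<in> {{a,b},{b,c},{a,c}}" for s1 s2
  proof (rule triangulation_open_segments_disjoint[OF tri mT])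
    from that have "{s1,s2} = {a,b} \<or> {s1,s2} = {b,c} \<or> {s1,s2} = {a,c}" by simp
    then show "{s1,s2} \<in> T" "{m1,m2} \<noteq> {s1,s2}"
      using sides not_side by (elim disjE; simp)+
  qed
  \<comment> \<open>an endpoint of a non-side edge lies outside the empty triangle\<close>
  obtain m m' where mm: "{m,m'} = {m1,m2}" and m_out: "m \<notin> convex hull {a,b,c}"
  proof (cases "m1 \<in> convex hull {a,b,c}")
    case True
    then have "m1 \<in> {a,b,c}" using m(1) empty by blast
    moreover have "m2 \<notin> convex hull {a,b,c}"
    proof
      assume "m2 \<in> convex hull {a,b,c}"
      then have "m2 \<in> {a,b,c}" using m(2) empty by blast
      with \<open>m1 \<in> {a,b,c}\<close> m(3) have "{m1,m2} \<in> {{a,b},{b,c},{a,c}}" by auto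
      with not_side show False ..
    qed
    ultimately show ?thesis using that[of m2 m1] by (simp add: insert_commute)
  qed blast
  obtain q where q: "q \<in> open_segment z m"
    and q_side: "q \<in> closed_segment b c \<or> q \<in> closed_segment c a \<or> q \<in> closed_segment a b"
    using interior_exit_through_side[OF nd z m_out] .
  have "z \<in> open_segment m' m" using z_m mm by (metis doubleton_eq_iff open_segment_commute)
  then have q_m: "q \<in> open_segment m1 m2"
    using q open_segment_subset_open_segment mm by (metis doubleton_eq_iff open_segment_commute subsetD)
  then have "q \<notin> {a,b,c}"
    using edges_of_open_segment[OF triangulation_edges[OF tri mT]] empty by blast
  with q_side have "q \<in> open_segment b c \<or> q \<in> open_segment a c \<or> q \<in> open_segment a b"
    by (auto simp: open_segment_def closed_segment_commute)
  then show False using q_m sides_disjoint[of a b] sides_disjoint[of b c] sides_disjoint[of a c] by blast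
qed

lemma crossing_segment_enters_interior:
  assumes nd: "orient a b c \<noteq> 0" and y0: "y0 \<in> open_segment a b" "y0 \<in> open_segment u v"
    and opp: "orient a b u * orient a b v < 0"
  obtains y where "y \<in> open_segment u v" "in_triangle_interior a b c y"
proof -
  obtain m m' where mm: "{m,m'} = {u,v}" and m_side: "same_side a b c m"
    using opposite_sides_same_side[OF opp nd] by (metis insert_commute)
  have y0_m: "y0 \<in> open_segment m m'" using y0(2) mm by (metis doubleton_eq_iff open_segment_commute)
  obtain r where r: "0 < r" "r < 1" "y0 = lerp a b r" using y0(1) by (auto simp: open_segment_lerp_iff)
  have nd': "orient b c a \<noteq> 0" using orient_nonzero_rotate[OF nd] by simp
  have y0_bary: "bary a b c y0 = 1 - r" "bary b c a y0 = r" "bary c a b y0 = 0"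
    using r(3) bary_vertex[OF nd] bary_vertex[OF nd'] by (simp_all add: bary_lerp)
  obtain d where d: "0 < d" "d < 1"
    "\<forall>f\<in>{bary a b c, bary b c a}. (1 - d) * f y0 + d * f m > 0"
    using small_step_positive[of "{bary a b c, bary b c a}" y0 m] y0_bary r by auto
  define y where "y = (1 - d) *\<^sub>R y0 + d *\<^sub>R m"
  have "bary c a b m > 0"
    using m_side unfolding same_side_def bary_def by (auto simp: zero_less_divide_iff zero_less_mult_iff)
  then have "in_triangle_interior a b c y"
    using d y0_bary unfolding in_triangle_interior_def y_def bary_affine by simp
  moreover have "y \<in> open_segment m m'"
    unfolding y_def by (rule open_segment_towards_endpoint[OF y0_m d(1,2)])
  then have "y \<in> open_segment u v" using mm by (metis doubleton_eq_iff open_segment_commute)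
  ultimately show ?thesis using that by blast
qed

lemma apex_of_crossed_triangle:
  assumes tri: "is_triangulation S T" and nd: "orient a b c \<noteq> 0"
    and empty: "convex hull {a,b,c} \<inter> S = {a,b,c}" and sides: "{a,b} \<in> T" "{b,c} \<in> T" "{a,c} \<in> T"
    and uw: "{u,w} \<in> T" and vw: "{v,w} \<in> T" and ndw: "orient u v w \<noteq> 0"
    and empty_w: "convex hull {u,v,w} \<inter> S = {u,v,w}"
    and y: "y \<in> open_segment u v" "in_triangle_interior a b c y"
    and x: "x \<in> {a,b,c}" "same_side u v w x"
  shows "x = w"
proof (rule ccontr)
  assume "x \<noteq> w"
  have "x \<in> S" using x(1) empty by blast
  moreover have "x \<noteq> u" "x \<noteq> v" using same_side_nonzero[OF x(2)] by auto
  ultimately have x_out: "x \<notin> convex hull {u,v,w}" using empty_w \<open>x \<noteq> w\<close> by blast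
  have ndw': "orient v w u \<noteq> 0" "orient w u v \<noteq> 0" using orient_nonzero_rotate[OF ndw] by auto
  obtain r where r: "0 < r" "r < 1" "y = lerp u v r" using y(1) by (auto simp: open_segment_lerp_iff)
  have y_bary: "bary u v w y = 1 - r" "bary v w u y = r" "bary w u v y = 0"
    using r(3) bary_vertex[OF ndw] bary_vertex[OF ndw'(1)] by (simp_all add: bary_lerp)
  \<comment> \<open>push \<open>y\<close> into the interior of both triangles\<close>
  obtain e where e: "0 < e" "e < 1"
    "\<forall>f\<in>{bary a b c, bary b c a, bary c a b}. (1 - e) * f y + e * f w > 0"
    using small_step_positive[of "{bary a b c, bary b c a, bary c a b}" y w] y(2)
    unfolding in_triangle_interior_def by auto
  define y1 where "y1 = (1 - e) *\<^sub>R y + e *\<^sub>R w"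
  have y1_abc: "in_triangle_interior a b c y1"
    using e(3) unfolding in_triangle_interior_def y1_def bary_affine by simp
  have y1_uvw: "bary u v w y1 > 0" "bary v w u y1 > 0" "bary w u v y1 > 0"
    using y_bary r e bary_vertex[OF ndw'(2)] by (simp_all add: y1_def bary_affine)
  have x_w: "bary w u v x > 0"
    using x(2) unfolding same_side_def bary_def
    by (auto simp: zero_less_divide_iff zero_less_mult_iff orient_rotate[of w u v] orient_rotate[of w u x])
  then have "bary u v w x < 0 \<or> bary v w u x < 0"
    using x_out mem_convex_hull3_iff_bary[OF ndw] by auto
  then obtain l where l: "0 < l" "l < 1"
    "\<forall>f\<in>{bary u v w, bary v w u}. (1 - l) * f y1 + l * f x \<ge> 0"
    "\<exists>f\<in>{bary u v w, bary v w u}. (1 - l) * f y1 + l * f x = 0"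
    using first_exit_time[of "{bary u v w, bary v w u}" y1 x] y1_uvw by auto
  define z where "z = (1 - l) *\<^sub>R y1 + l *\<^sub>R x"
  have "x \<in> convex hull {a,b,c}" using x(1) by (auto intro: hull_inc)
  then have z_abc: "in_triangle_interior a b c z"
    unfolding z_def using in_triangle_interior_towards[OF nd y1_abc _ _ l(2)] l(1) by simp
  have "bary w u v z > 0" using l y1_uvw x_w by (simp add: z_def bary_affine add_pos_pos)
  then have z_hull: "z \<in> convex hull {u,v,w}"
    using l(3) mem_convex_hull3_iff_bary[OF ndw] by (simp add: z_def bary_affine)
  have "convex hull {v,w,u} = convex hull {u,v,w}" "convex hull {w,u,v} = convex hull {u,v,w}"
    by (simp_all add: insert_commute)
  moreover have "bary u v w z = 0 \<or> bary v w u z = 0"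
    using l(4) by (simp add: z_def bary_affine)
  ultimately have "z \<in> closed_segment v w \<or> z \<in> closed_segment w u"
    using bary_zero_closed_segment[OF ndw'(1), of z] bary_zero_closed_segment[OF ndw'(2), of z] z_hull
    by auto
  moreover have "{w,u} \<in> T" using uw by (simp add: insert_commute)
  ultimately show False
    using triangulation_edge_avoids_interior[OF tri nd empty sides _ z_abc] vw by blast
qed

lemma collinear_between:
  assumes ab: "a \<noteq> b" and bc: "b \<noteq> c" and ac: "a \<noteq> c" and coll: "orient a b c = 0"
  shows "c \<in> open_segment a b \<or> b \<in> open_segment a c \<or> a \<in> open_segment b c"
proof -
  obtain s where s: "c = lerp a b s" using collinear_lerp[OF ab coll] .
  have "s \<noteq> 0" "s \<noteq> 1" using s ac bc by auto
  then consider "0 < s \<and> s < 1" | "s > 1" | "s < 0" by linarith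
  then show ?thesis
  proof cases
    case 1
    then show ?thesis using s ab by (auto simp: open_segment_lerp_iff)
  next
    case 2
    have "lerp a c (1 / s) = lerp (lerp a b 0) (lerp a b s) (1 / s)" unfolding s by simp
    also have "\<dots> = b" unfolding lerp_lerp using 2 by simp
    finally have "b \<in> open_segment a c"
      using 2 ac unfolding open_segment_lerp_iff by (metis divide_less_eq_1_pos less_trans
          zero_less_divide_1_iff zero_less_one)
    then show ?thesis by blast
  next
    case 3
    define m where "m = - s / (1 - s)"
    have m: "0 < m" "m < 1" using 3 by (simp_all add: m_def field_simps)
    have "lerp c b m = lerp (lerp a b s) (lerp a b 1) m" unfolding s by simp
    also have "\<dots> = a" unfolding lerp_lerp using 3 by (simp add: m_def field_simps)
    finally have "a \<in> open_segment c b" using m bc unfolding open_segment_lerp_iff by metis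
    then show ?thesis by (simp add: open_segment_commute)
  qed
qed

lemma collinear_outside_segment:
  assumes uv: "u \<noteq> v" and coll: "orient u v c = 0" and y0: "y0 \<in> open_segment u v"
    and out: "c \<notin> closed_segment u v"
  shows "u \<in> open_segment c y0 \<or> v \<in> open_segment c y0"
proof -
  obtain sc where sc: "c = lerp u v sc" using collinear_lerp[OF uv coll] .
  obtain r where r: "0 < r" "r < 1" "y0 = lerp u v r" using y0 by (auto simp: open_segment_lerp_iff)
  have "c \<noteq> y0" using out y0 open_closed_segment by blast
  have "sc < 0 \<or> sc > 1" using out sc lerp_in_closed_segment by (meson not_le)
  then show ?thesis
  proof
    assume "sc < 0"
    define l where "l = - sc / (r - sc)"
    have l: "0 < l" "l < 1" using \<open>sc < 0\<close> r by (simp_all add: l_def field_simps)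
    have "l * (r - sc) = - sc" using \<open>sc < 0\<close> r by (simp add: l_def)
    then have "(1 - l) * sc + l * r = 0" by (simp add: algebra_simps)
    then have "u = lerp c y0 l" unfolding sc r(3) lerp_lerp by simp
    then show ?thesis using l \<open>c \<noteq> y0\<close> unfolding open_segment_lerp_iff by blast
  next
    assume "sc > 1"
    define l where "l = (sc - 1) / (sc - r)"
    have l: "0 < l" "l < 1" using \<open>sc > 1\<close> r by (simp_all add: l_def field_simps)
    have "l * (sc - r) = sc - 1" using \<open>sc > 1\<close> r by (simp add: l_def)
    then have "(1 - l) * sc + l * r = 1" by (simp add: algebra_simps)
    then have "v = lerp c y0 l" unfolding sc r(3) lerp_lerp by simp
    then show ?thesis using l \<open>c \<noteq> y0\<close> unfolding open_segment_lerp_iff by blast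
  qed
qed

lemma flipped_edge_apex:
  assumes fin: "finite S" and tri: "is_triangulation S T" and tri': "is_triangulation S T'"
    and kept: "T - E \<subseteq> T'"
    and E: "\<forall>e\<in>E. \<forall>f\<in>E. e \<noteq> f \<longrightarrow> \<not> (\<exists>t\<in>triangles_of S T. e \<subseteq> t \<and> f \<subseteq> t)"
    and nd: "orient a b c \<noteq> 0" and empty: "convex hull {a,b,c} \<inter> S = {a,b,c}"
    and sides: "{a,b} \<in> T'" "{b,c} \<in> T'" "{a,c} \<in> T'"
    and uv: "{u,v} \<in> T" "{u,v} \<in> E"
    and y: "y \<in> open_segment u v" "in_triangle_interior a b c y"
    and x: "x \<in> {a,b,c}" "orient u v x \<noteq> 0"
  shows "{u,x} \<in> T \<and> {v,x} \<in> T \<and> (\<forall>x'\<in>{a,b,c}. same_side u v x x' \<longrightarrow> x' = x)"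
proof -
  have "x \<in> S" using x(1) empty by blast
  then obtain w where wS: "w \<in> S" and w_side: "same_side u v x w" and uw: "{u,w} \<in> T" and vw: "{v,w} \<in> T"
    and empty_w: "convex hull {u,v,w} \<inter> S = {u,v,w}"
    using triangulation_adjacent_triangle[OF fin tri uv(1) _ x(2)] by blast
  have ndw: "orient u v w \<noteq> 0" using same_side_nonzero[OF w_side] by simp
  then have "u \<noteq> v" "v \<noteq> w" "u \<noteq> w" by auto
  then have "{u,v,w} \<in> triangles_of S T"
    unfolding triangles_of_def using uv(1) uw vw empty_w by blast
  \<comment> \<open>the other two sides of the old triangle on \<open>x\<close>'s side of \<open>uv\<close> survive the flip\<close>
  moreover have "{u,v} \<noteq> {u,w}" "{u,v} \<noteq> {v,w}"
    using \<open>v \<noteq> w\<close> \<open>u \<noteq> w\<close> by (metis insertCI insertE singletonD)+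
  moreover have "{u,v} \<subseteq> {u,v,w}" "{u,w} \<subseteq> {u,v,w}" "{v,w} \<subseteq> {u,v,w}" by auto
  ultimately have "{u,w} \<notin> E" "{v,w} \<notin> E"
    using bspec[OF E uv(2)] by meson+
  then have "{u,w} \<in> T'" "{v,w} \<in> T'" using uw vw kept by blast+
  then have apex: "x' = w" if "x' \<in> {a,b,c}" "same_side u v w x'" for x'
    by (rule apex_of_crossed_triangle[OF tri' nd empty sides _ _ ndw empty_w y that])
  have "x = w" using apex[OF x(1) same_side_sym[OF w_side]] .
  then show ?thesis using uw vw apex by simp
qed

lemma triangulation_triangle_nondegenerate:
  assumes tri: "is_triangulation S T" and abc: "a \<noteq> b" "b \<noteq> c" "a \<noteq> c"
    and sides: "{a,b} \<in> T" "{b,c} \<in> T" "{a,c} \<in> T"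
  shows "orient a b c \<noteq> 0"
proof
  assume "orient a b c = 0"
  moreover have "{a,b} \<in> edges_of S" "{b,c} \<in> edges_of S"
    using sides triangulation_edges[OF tri] by blast+
  then have "a \<in> S" "b \<in> S" "c \<in> S" by (simp_all add: edges_of_iff)
  moreover have "open_segment a b \<inter> S = {}" "open_segment b c \<inter> S = {}" "open_segment a c \<inter> S = {}"
    using sides edges_of_open_segment triangulation_edges[OF tri] by blast+
  ultimately show False using collinear_between[OF abc] by blast
qed

lemma collinear_vertex_on_crossing_edge:
  assumes nd: "orient a b c \<noteq> 0" and empty: "convex hull {a,b,c} \<inter> S = {a,b,c}"
    and uv: "{u,v} \<in> edges_of S" and y0: "y0 \<in> open_segment a b" "y0 \<in> open_segment u v"
    and coll: "orient u v c = 0"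
  shows "c = u \<or> c = v"
proof (cases "c \<in> closed_segment u v")
  case True
  then show ?thesis using uv empty by (auto simp: edges_of_iff)
next
  case False
  \<comment> \<open>otherwise \<open>u\<close> or \<open>v\<close> would be a point of \<open>S\<close> inside the triangle \<open>abc\<close>\<close>
  have "u \<noteq> v" using uv by (simp add: edges_of_iff)
  then have "u \<in> open_segment c y0 \<or> v \<in> open_segment c y0"
    using collinear_outside_segment[OF _ coll y0(2) False] by blast
  moreover have "in_triangle_interior a b c m" if m: "m \<in> open_segment c y0" for m
  proof -
    obtain r where r: "0 < r" "r < 1" "y0 = lerp a b r" using y0(1) unfolding open_segment_lerp_iff by blast
    obtain l where l: "0 < l" "l < 1" "m = lerp c y0 l" using m unfolding open_segment_lerp_iff by blast
    have nd': "orient b c a \<noteq> 0" "orient c a b \<noteq> 0" using orient_nonzero_rotate[OF nd] by auto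
    show ?thesis
      using r l bary_vertex[OF nd] bary_vertex[OF nd'(1)] bary_vertex[OF nd'(2)]
      unfolding in_triangle_interior_def by (simp add: bary_lerp)
  qed
  moreover have "u \<in> S" "v \<in> S" using uv by (simp_all add: edges_of_iff)
  ultimately show ?thesis
    using in_triangle_interior_not_in_S[OF nd empty] by blast
qed

lemma flip_triangle_adjacent_side_kept:
  assumes fin: "finite S" and tri: "is_triangulation S T" and tri': "is_triangulation S T'"
    and kept: "T - E \<subseteq> T'"
    and E: "\<forall>e\<in>E. \<forall>f\<in>E. e \<noteq> f \<longrightarrow> \<not> (\<exists>t\<in>triangles_of S T. e \<subseteq> t \<and> f \<subseteq> t)"
    and abc: "a \<noteq> b" "b \<noteq> c" "a \<noteq> c"
    and sides: "{a,b} \<in> T'" "{b,c} \<in> T'" "{a,c} \<in> T'"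
    and empty: "convex hull {a,b,c} \<inter> S = {a,b,c}"
    and new: "{a,b} \<notin> T"
  shows "{b,c} \<in> T"
proof -
  have ab_edge: "{a,b} \<in> edges_of S" using triangulation_edges[OF tri' sides(1)] .
  have nd: "orient a b c \<noteq> 0" using triangulation_triangle_nondegenerate[OF tri' abc sides] .
  obtain g where gT: "g \<in> T" and "\<not> noncrossing {a,b} g"
    using triangulation_maximal[OF tri ab_edge new] by blast
  moreover obtain u v where g: "g = {u,v}" using triangulation_edgeE[OF tri gT] by metis
  ultimately have uvT: "{u,v} \<in> T" and uv_edge: "{u,v} \<in> edges_of S"
    and cross: "{a,b} \<noteq> {u,v}" "open_segment a b \<inter> open_segment u v \<noteq> {}"
    using crossing_iff[OF ab_edge] triangulation_edges[OF tri gT] by auto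
  then obtain y0 where y0: "y0 \<in> open_segment a b" "y0 \<in> open_segment u v" by blast
  have "{u,v} \<notin> T'"
    using triangulation_noncrossing[OF tri' sides(1)] \<open>\<not> noncrossing {a,b} g\<close> g by blast
  then have uvE: "{u,v} \<in> E" using uvT kept by blast
  have ab_opp: "orient u v a * orient u v b < 0"
    using crossing_edges_opposite_sides[OF uv_edge ab_edge _ y0(2,1)] cross(1) by metis
  obtain y where y: "y \<in> open_segment u v" "in_triangle_interior a b c y"
    using crossing_segment_enters_interior[OF nd y0
        crossing_edges_opposite_sides[OF ab_edge uv_edge cross(1) y0]] .
  note apex = flipped_edge_apex[OF fin tri tri' kept E nd empty sides uvT uvE y]
  have oa: "orient u v a \<noteq> 0" "orient u v b \<noteq> 0" using ab_opp by auto
  have "orient u v c = 0"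
  proof (rule ccontr)
    assume "orient u v c \<noteq> 0"
    then have "same_side u v c a \<or> same_side u v c b"
      using opposite_sides_same_side[OF ab_opp] by blast
    then have "same_side u v a c \<or> same_side u v b c" using same_side_sym by blast
    moreover have "c \<in> {a,b,c}" by simp
    ultimately have "c = a \<or> c = b"
      using apex[of a] apex[of b] oa by blast
    with abc show False by blast
  qed
  then have "c = u \<or> c = v"
    using collinear_vertex_on_crossing_edge[OF nd empty uv_edge y0] by blast
  moreover have "{u,b} \<in> T" "{v,b} \<in> T" using apex[of b] oa by auto
  ultimately show ?thesis by (auto simp: insert_commute)
qed

lemma doubleton_subset_triangle:
  "x \<noteq> y \<Longrightarrow> {x,y} \<subseteq> {a,b,c} \<Longrightarrow> {x,y} = {a,b} \<or> {x,y} = {b,c} \<or> {x,y} = {a,c}"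
  by auto

lemma parallel_flip_sym:
  assumes fin: "finite S" and tri: "is_triangulation S T" and flip: "parallel_flip S T T'"
  shows "parallel_flip S T' T"
proof -
  obtain E E' where T': "T' = (T - E) \<union> E'" and tri': "is_triangulation S T'"
    and E: "\<forall>e\<in>E. \<forall>f\<in>E. e \<noteq> f \<longrightarrow> \<not> (\<exists>t\<in>triangles_of S T. e \<subseteq> t \<and> f \<subseteq> t)"
    using flip unfolding parallel_flip_def by blast
  have kept: "T - E \<subseteq> T'" using T' by blast
  note kept_side = flip_triangle_adjacent_side_kept[OF fin tri tri' kept E]
  have "\<not> (\<exists>t\<in>triangles_of S T'. e \<subseteq> t \<and> f \<subseteq> t)"
    if e: "e \<in> T'" "e \<notin> T" and f: "f \<in> T'" "f \<notin> T" and "e \<noteq> f" for e f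
  proof
    assume "\<exists>t\<in>triangles_of S T'. e \<subseteq> t \<and> f \<subseteq> t"
    then obtain t where t: "t \<in> triangles_of S T'" "e \<subseteq> t" "f \<subseteq> t" by blast
    then obtain a b c where "t = {a,b,c}" and abc: "a \<noteq> b" "b \<noteq> c" "a \<noteq> c"
      and sides: "{a,b} \<in> T'" "{b,c} \<in> T'" "{a,c} \<in> T'"
      and empty: "convex hull {a,b,c} \<inter> S = {a,b,c}"
      unfolding triangles_of_def by blast
    obtain x y where "e = {x,y}" "x \<noteq> y" using triangulation_edgeE[OF tri' e(1)] by blast
    with t(2) \<open>t = {a,b,c}\<close> have e3: "e = {a,b} \<or> e = {b,c} \<or> e = {a,c}"
      using doubleton_subset_triangle by simp
    obtain x' y' where "f = {x',y'}" "x' \<noteq> y'" using triangulation_edgeE[OF tri' f(1)] by blast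
    with t(3) \<open>t = {a,b,c}\<close> have f3: "f = {a,b} \<or> f = {b,c} \<or> f = {a,c}"
      using doubleton_subset_triangle by simp
    have perm: "{b,a} = {a,b}" "{c,a} = {a,c}" "{c,b} = {b,c}" "{b,a,c} = {a,b,c}" "{b,c,a} = {a,b,c}"
      by auto
    have "{a,b} \<in> T \<or> {b,c} \<in> T" using kept_side[OF abc sides empty] by blast
    moreover have "{a,b} \<in> T \<or> {a,c} \<in> T"
      using kept_side[of b a c] abc sides empty unfolding perm by blast
    moreover have "{b,c} \<in> T \<or> {a,c} \<in> T"
      using kept_side[of b c a] abc sides empty unfolding perm by blast
    ultimately show False using e3 f3 e(2) f(2) \<open>e \<noteq> f\<close> by fastforce
  qed
  then show ?thesis
    unfolding parallel_flip_def using tri by (intro exI[of _ "T' - T"] exI[of _ T]) auto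
qed

section \<open>Flip paths and the flip distance\<close>

lemma is_flip_path_Cons_Cons:
  "is_flip_path S (x # y # ys) \<longleftrightarrow>
     is_triangulation S x \<and> parallel_flip S x y \<and> is_flip_path S (y # ys)"
  unfolding is_flip_path_def by (auto simp: less_Suc_eq_0_disj)

lemma is_flip_path_append:
  "is_flip_path S P \<Longrightarrow> is_flip_path S Q \<Longrightarrow> last P = hd Q \<Longrightarrow> is_flip_path S (P @ tl Q)"
proof (induction P rule: induct_list012)
  case 1
  then show ?case by (simp add: is_flip_path_def)
next
  case (2 x)
  then show ?case by (cases Q) auto
next
  case (3 x y ys)
  then show ?case by (simp add: is_flip_path_Cons_Cons)
qed

lemma is_flip_path_rev:
  assumes "finite S" "is_flip_path S P"
  shows "is_flip_path S (rev P)"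
  unfolding is_flip_path_def
proof (intro conjI allI impI)
  show "rev P \<noteq> []" "\<forall>X\<in>set (rev P). is_triangulation S X"
    using assms(2) by (auto simp: is_flip_path_def)
  fix i assume i: "Suc i < length (rev P)"
  define j where "j = length P - Suc (Suc i)"
  have "Suc j < length P" "rev P ! i = P ! Suc j" "rev P ! Suc i = P ! j"
    using i by (simp_all add: j_def rev_nth Suc_diff_Suc)
  moreover from this have "is_triangulation S (P ! j)" "parallel_flip S (P ! j) (P ! Suc j)"
    using assms(2) unfolding is_flip_path_def by (auto dest: Suc_lessD)
  ultimately show "parallel_flip S (rev P ! i) (rev P ! Suc i)"
    using parallel_flip_sym[OF assms(1)] by simp
qed

lemma flip_dist_le_path_length:
  "is_flip_path S P \<Longrightarrow> flip_dist S (hd P) (last P) \<le> path_length P"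
  unfolding flip_dist_def by (rule Least_le) blast

lemma flip_dist_le_via_common_end:
  assumes "finite S" "is_flip_path S P" "is_flip_path S Q" "last P = last Q"
  shows "flip_dist S (hd P) (hd Q) \<le> path_length P + path_length Q"
proof -
  have P: "P \<noteq> []" and Q: "Q \<noteq> []" using assms(2,3) by (simp_all add: is_flip_path_def)
  have "is_flip_path S (P @ tl (rev Q))"
    using is_flip_path_append[OF assms(2) is_flip_path_rev[OF assms(1,3)]] assms(4) Q
    by (simp add: hd_rev)
  moreover have "hd (P @ tl (rev Q)) = hd P" using P by simp
  moreover have "last (P @ tl (rev Q)) = hd Q"
  proof -
    obtain ys q where "Q = ys @ [q]" using Q by (cases Q rule: rev_cases) auto
    then show ?thesis using P assms(4) by (cases ys) simp_all
  qed
  moreover have "path_length (P @ tl (rev Q)) = path_length P + path_length Q"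
    using P Q by (cases P; cases Q) (simp_all add: path_length_def)
  ultimately show ?thesis using flip_dist_le_path_length by metis
qed

lemma sum_arcs_le_twice_sum_vertices:
  fixes f :: "'a \<Rightarrow> real"
  assumes A: "A \<subseteq> I \<times> I" and I: "finite I" and nonneg: "\<And>i. i \<in> I \<Longrightarrow> f i \<ge> 0"
    and out: "\<And>v. card {j. (v,j) \<in> A} \<le> 1" and inn: "\<And>v. card {i. (i,v) \<in> A} \<le> 1"
  shows "(\<Sum>(i,j)\<in>A. f i + f j) \<le> 2 * (\<Sum>i\<in>I. f i)"
proof -
  have fin: "finite {j. (v,j) \<in> A}" "finite {i. (i,v) \<in> A}" for v
    using A I by (auto intro: finite_subset[of _ I])
  have "inj_on fst A"
  proof (rule inj_onI)
    fix x y assume "x \<in> A" "y \<in> A" "fst x = fst y"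
    then show "x = y"
      using card_le_Suc0_iff_eq[OF fin(1)] out[of "fst x"] by (cases x, cases y) auto
  qed
  moreover have "inj_on snd A"
  proof (rule inj_onI)
    fix x y assume "x \<in> A" "y \<in> A" "snd x = snd y"
    then show "x = y"
      using card_le_Suc0_iff_eq[OF fin(2)] inn[of "snd x"] by (cases x, cases y) auto
  qed
  ultimately have "(\<Sum>x\<in>A. f (fst x)) = sum f (fst ` A)" "(\<Sum>x\<in>A. f (snd x)) = sum f (snd ` A)"
    by (simp_all add: sum.reindex)
  moreover have "sum f (fst ` A) \<le> sum f I" "sum f (snd ` A) \<le> sum f I"
    using A I nonneg by (auto intro!: sum_mono2)
  ultimately show ?thesis
    by (simp add: case_prod_beta sum.distrib)
qed

theorem theorem2:
  fixes S :: "point set" and k :: nat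
    and T :: "nat \<Rightarrow> triangulation"
    and C :: triangulation
    and P :: "nat \<Rightarrow> triangulation list"
    and A :: "(nat \<times> nat) set"
  assumes "finite S"
    and "\<forall>i\<in>{1..k}. is_triangulation S (T i)"
    and "is_triangulation S C"
    and "\<forall>i\<in>{1..k}. is_flip_path S (P i) \<and> hd (P i) = T i \<and> last (P i) = C"
    and "is_cycle_packing k A"
  shows "(\<Sum>i=1..k. real (path_length (P i))) \<ge>
           (\<Sum>(i,j)\<in>A. real (flip_dist S (T i) (T j))) / 2"
proof -
  let ?L = "\<lambda>i. real (path_length (P i))"
  have A: "A \<subseteq> {1..k} \<times> {1..k}"
    and deg: "\<And>v. card {j. (v,j) \<in> A} \<le> 1" "\<And>v. card {i. (i,v) \<in> A} \<le> 1"
    using assms(5) unfolding is_cycle_packing_def by auto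
  have "real (flip_dist S (T i) (T j)) \<le> ?L i + ?L j" if "(i,j) \<in> A" for i j
    using flip_dist_le_via_common_end[OF assms(1), of "P i" "P j"] assms(4) A that by fastforce
  then have "(\<Sum>(i,j)\<in>A. real (flip_dist S (T i) (T j))) \<le> (\<Sum>(i,j)\<in>A. ?L i + ?L j)"
    by (intro sum_mono) auto
  also have "\<dots> \<le> 2 * (\<Sum>i=1..k. ?L i)"
    by (rule sum_arcs_le_twice_sum_vertices[OF A _ _ deg]) auto
  finally show ?thesis by simp
qed

end
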